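(* Let $N=n+1\ge3$ and let $h=\operatorname{trop}(F^R_{C_N,k})$ (the same tropical polynomial for every $k=1,\dots,n$) be the tropicalization, with respect to the valuation described below, of the unmixed synchronization system. Then the tropical hypersurface defined by $h$ has exactly $N\binom{N-1}{\lfloor (N-1)/2\rfloor}$ (stable) self-intersection points, and each intersection point has multiplicity one.
   Context: $C_N$ is the cycle graph on vertices $0,\dots,N-1$ with edge set $\mathcal{E}(C_N)=\{\{0,1\},\dots,\{N-2,N-1\},\{N-1,0\}\}$; $\mathbf{e}_1,\dots,\mathbf{e}_n$ is the standard basis of $\mathbb{R}^n$ with $\mathbf{e}_0=\mathbf{0}$. The unmixed synchronization system is $F^R_{C_N,k}(\mathbf{x}) = c^R_k - \sum_{\{i,j\}\in\mathcal{E}(C_N)}(a^R_{ijk}x_i/x_j + a^R_{jik}x_j/x_i)$, $k=1,\dots,n$, with $x_0=1$, whose nonzero coefficients lie in a field with a valuation $\operatorname{val}$ (e.g. Puiseux series) satisfying $\operatorname{val}(c^R_k)=0$ and $\operatorname{val}(a^R_{ijk})=2$ if $N$ is even and $\{i,j\}=\{0,1\}$, $\operatorname{val}(a^R_{ijk})=1$ otherwise. Its tropicalization is $h(\mathbf{w}) = \min\big(0,\ \min_{(i,j)}(\operatorname{val}(a^R_{ijk}) + \langle\mathbf{w},\mathbf{e}_i-\mathbf{e}_j\rangle)\big)$ for $\mathbf{w}\in\mathbb{R}^n$, the inner minimum over ordered pairs $(i,j)$ with $\{i,j\}\in\mathcal{E}(C_N)$; this is independent of $k$. The self-intersection points of the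 tropical hypersurface of $h$ are the points of the stable intersection of $n$ copies of this tropical hypersurface, with their tropical intersection multiplicities. *)

theory Defs
  imports "HOL-Analysis.Analysis"
begin

text \<open>Vectors of R^n are represented as functions nat => real, only coordinates 1..n
  are used (coordinate 0 plays the role of the dehomogenised variable x_0 = 1).\<close>

definition unitv :: "nat \<Rightarrow> nat \<Rightarrow> real" where
  "unitv i = (\<lambda>k. if k = i \<and> i \<noteq> 0 then 1 else 0)"

definition ip :: "nat \<Rightarrow> (nat \<Rightarrow> real) \<Rightarrow> (nat \<Rightarrow> real) \<Rightarrow> real" where
  "ip n w v = (\<Sum>k\<in>{1..n}. w k * v k)"

definition cycle_edges :: "nat \<Rightarrow> nat set set" where
  "cycle_edges N = {{i, (i + 1) mod N} | i. i < N}"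

text \<open>valuations of the coefficients a^R_{ijk}\<close>
definition val_a :: "nat \<Rightarrow> nat \<Rightarrow> nat \<Rightarrow> real" where
  "val_a N i j = (if even N \<and> {i, j} = {0, 1} then 2 else 1)"

text \<open>A tropical polynomial is a finite set of terms (exponent vector, coefficient);
  it evaluates to min over terms of (coefficient + <w, exponent>).\<close>
type_synonym trop_poly = "((nat \<Rightarrow> real) \<times> real) set"

definition trop_eval :: "trop_poly \<Rightarrow> nat \<Rightarrow> (nat \<Rightarrow> real) \<Rightarrow> real" where
  "trop_eval T n w = Min ((\<lambda>(a, c). c + ip n w a) ` T)"

text \<open>The tropicalization h of F^R_{C_N,k} (same for all k): constant term 0 and terms
  val(a_ij) + <w, e_i - e_j> for ordered pairs (i,j) with {i,j} an edge of C_N.\<close>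
definition h_terms :: "nat \<Rightarrow> trop_poly" where
  "h_terms N = insert ((\<lambda>_. 0), 0)
     {((\<lambda>k. unitv i k - unitv j k), val_a N i j) | i j. {i, j} \<in> cycle_edges N}"

definition init_exps :: "trop_poly \<Rightarrow> nat \<Rightarrow> (nat \<Rightarrow> real) \<Rightarrow> (nat \<Rightarrow> real) set" where
  "init_exps T n w = {a. \<exists>c. (a, c) \<in> T \<and> c + ip n w a = trop_eval T n w}"

definition conv_hull :: "(nat \<Rightarrow> real) set \<Rightarrow> (nat \<Rightarrow> real) set" where
  "conv_hull S = {x. \<exists>u. (\<forall>p\<in>S. 0 \<le> u p) \<and> sum u S = 1 \<and> x = (\<lambda>k. \<Sum>p\<in>S. u p * p k)}"

definition vol :: "nat \<Rightarrow> (nat \<Rightarrow> real) set \<Rightarrow> real" where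
  "vol n P = measure (PiM {1..n} (\<lambda>_. lborel)) ((\<lambda>x. restrict x {1..n}) ` P)"

definition mink_sum :: "(nat \<Rightarrow> (nat \<Rightarrow> real) set) \<Rightarrow> nat set \<Rightarrow> (nat \<Rightarrow> real) set" where
  "mink_sum P S = {(\<lambda>k. \<Sum>i\<in>S. x i k) | x. \<forall>i\<in>S. x i \<in> P i}"

text \<open>mixed volume MV(P_1,...,P_n), normalised so that MV(P,...,P) = n! vol(P)\<close>
definition mixed_volume :: "nat \<Rightarrow> (nat \<Rightarrow> (nat \<Rightarrow> real) set) \<Rightarrow> real" where
  "mixed_volume n P = (\<Sum>S\<in>Pow {1..n}. (-1) ^ (n - card S) * vol n (mink_sum P S))"

text \<open>Stable intersection multiplicity at w of the tropical hypersurfaces of T 1, ..., T n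
  in R^n: mixed volume of the initial Newton polytopes at w.\<close>
definition stable_mult :: "nat \<Rightarrow> (nat \<Rightarrow> trop_poly) \<Rightarrow> (nat \<Rightarrow> real) \<Rightarrow> real" where
  "stable_mult n T w = mixed_volume n (\<lambda>i. conv_hull (init_exps (T i) n w))"

definition pts :: "nat \<Rightarrow> (nat \<Rightarrow> real) set" where
  "pts n = {w. \<forall>k. k \<notin> {1..n} \<longrightarrow> w k = 0}"

definition self_int_mult :: "nat \<Rightarrow> (nat \<Rightarrow> real) \<Rightarrow> real" where
  "self_int_mult N w = stable_mult (N - 1) (\<lambda>_. h_terms N) w"

definition self_int_points :: "nat \<Rightarrow> (nat \<Rightarrow> real) set" where
  "self_int_points N = {w \<in> pts (N - 1). self_int_mult N w \<noteq> 0}"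

end

(*
  Write d_e(w) = w_e - w_(e+1 mod N) for the differences of w along the edges of the cycle; they
  sum to zero and determine w.  The terms of h take the values 0 and val_e +- d_e(w) at w, so the
  initial exponents at w are among 0 and +-(e_e - e_(e+1)).  Unless |d_j| < val_j for one edge j
  and |d_e| = val_e for all other edges, some nonzero linear form is constant on the initial
  exponents (a parity count of the signs rules out that every edge contributes an initial
  exponent), so the mixed volume vanishes.  At the remaining points the minimum is 0 and the
  initial exponents 0 and +-(e_e - e_(e+1)), e ~= j, are the vertices of a unimodular simplex,
  whose mixed volume is 1.  These points are indexed by j and the signs of the d_e, e ~= j,
  subject to |sum_(e ~= j) +-val_e| < val_j, and there are N * binom(N-1, (N-1) div 2) of them.
*)
theory Submission
  imports Defs
begin

section \<open>Lebesgue measure on the coordinates 1..n\<close>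

lemma nn_integral_lborel_affine_unit:
  fixes f :: "real \<Rightarrow> ennreal"
  assumes "f \<in> borel_measurable borel" and "\<bar>\<epsilon>\<bar> = 1"
  shows "(\<integral>\<^sup>+y. f (c + \<epsilon> * y) \<partial>lborel) = (\<integral>\<^sup>+y. f y \<partial>lborel)"
proof -
  have "\<epsilon> \<noteq> 0" using assms(2) by auto
  then show ?thesis using nn_integral_real_affine[OF assms(1), of \<epsilon> c] assms(2) by simp
qed

lemma borel_measurable_nn_integral_fun_upd:
  assumes "f \<in> borel_measurable (PiM (insert m I) (\<lambda>_. lborel))"
  shows "(\<lambda>z. \<integral>\<^sup>+y. f (z(m := y)) \<partial>lborel) \<in> borel_measurable (PiM I (\<lambda>_. lborel::real measure))"
proof -
  have "(\<lambda>(z, y). f (z(m := y))) \<in> borel_measurable (PiM I (\<lambda>_. lborel) \<Otimes>\<^sub>M lborel)"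
    using measurable_comp[OF measurable_add_dim[of m I "\<lambda>_. lborel"] assms]
    by (simp add: comp_def case_prod_beta')
  from sigma_finite_measure.borel_measurable_nn_integral_fst[OF _ this] show ?thesis
    by (simp add: lborel.sigma_finite_measure_axioms)
qed

lemma nn_integral_fun_upd_affine:
  fixes z :: "nat \<Rightarrow> real" and \<epsilon> c :: real
  assumes "z \<in> space (PiM I (\<lambda>_. lborel))" and "m \<notin> I" and "\<bar>\<epsilon>\<bar> = 1"
    and "f \<in> borel_measurable (PiM (insert m I) (\<lambda>_. lborel))"
  shows "(\<integral>\<^sup>+y. f (z(m := \<epsilon> * y + c)) \<partial>lborel) = (\<integral>\<^sup>+y. f (z(m := y)) \<partial>lborel)"
proof -
  from measurable_comp[OF measurable_component_update[OF assms(1,2)] assms(4)]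
  have "(\<lambda>y. f (z(m := y))) \<in> borel_measurable borel"
    by (simp add: comp_def measurable_lborel2)
  then show ?thesis
    using nn_integral_lborel_affine_unit[of _ \<epsilon> c] assms(3) by (simp add: add.commute)
qed

definition depends_on_lower :: "nat set \<Rightarrow> (nat \<Rightarrow> nat) \<Rightarrow> (nat \<Rightarrow> (nat \<Rightarrow> real) \<Rightarrow> real) \<Rightarrow> bool" where
  "depends_on_lower I r g \<longleftrightarrow> (\<forall>c\<in>I. (\<forall>x. g c x = g c (restrict x {i\<in>I. r i < r c}))
     \<and> g c \<in> borel_measurable (PiM {i\<in>I. r i < r c} (\<lambda>_. lborel)))"

lemma depends_on_lowerD:
  assumes "depends_on_lower I r g" and "c \<in> I"
  shows "g c x = g c (restrict x {i\<in>I. r i < r c})"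
    and "g c \<in> borel_measurable (PiM {i\<in>I. r i < r c} (\<lambda>_. lborel))"
  using assms(1)[unfolded depends_on_lower_def, rule_format, OF assms(2)] by blast+

lemma depends_on_lower_measurable:
  assumes "depends_on_lower I r g" and "c \<in> I"
  shows "g c \<in> borel_measurable (PiM I (\<lambda>_. lborel))"
proof -
  have "(\<lambda>x. g c (restrict x {i\<in>I. r i < r c})) \<in> borel_measurable (PiM I (\<lambda>_. lborel))"
    using measurable_comp[OF measurable_restrict_subset depends_on_lowerD(2)[OF assms]]
    by (auto simp: comp_def)
  moreover have "(\<lambda>x. g c (restrict x {i\<in>I. r i < r c})) = g c"
    by (rule ext) (rule depends_on_lowerD(1)[OF assms, symmetric])
  ultimately show ?thesis by simp
qed

lemma depends_on_lower_fun_upd: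
  assumes "depends_on_lower I r g" and "c \<in> I" and "r c \<le> r m"
  shows "g c (x(m := y)) = g c x"
proof -
  have "restrict (x(m := y)) {i\<in>I. r i < r c} = restrict x {i\<in>I. r i < r c}"
    using assms(3) by (intro ext) (auto simp: restrict_def)
  then show ?thesis
    using depends_on_lowerD(1)[OF assms(1,2), of x] depends_on_lowerD(1)[OF assms(1,2), of "x(m := y)"]
    by simp
qed

lemma depends_on_lower_remove_max:
  assumes "depends_on_lower I r g" and "\<forall>i\<in>I. r i \<le> r m"
  shows "depends_on_lower (I - {m}) r g"
  unfolding depends_on_lower_def
proof
  fix c assume c: "c \<in> I - {m}"
  then have lower: "{i\<in>I - {m}. r i < r c} = {i\<in>I. r i < r c}" using assms(2) by auto
  show "(\<forall>x. g c x = g c (restrict x {i\<in>I - {m}. r i < r c}))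
      \<and> g c \<in> borel_measurable (PiM {i\<in>I - {m}. r i < r c} (\<lambda>_. lborel))"
    unfolding lower using depends_on_lowerD[OF assms(1)] c by blast
qed

text \<open>Peeling off the coordinate of largest rank, Fubini reduces the claim to translation and
  reflection invariance of \<open>lborel\<close>.\<close>

lemma nn_integral_PiM_triangular:
  fixes r :: "nat \<Rightarrow> nat" and \<epsilon> :: "nat \<Rightarrow> real" and g :: "nat \<Rightarrow> (nat \<Rightarrow> real) \<Rightarrow> real"
  assumes "finite I" and "inj_on r I" and "\<forall>c\<in>I. \<bar>\<epsilon> c\<bar> = 1" and "depends_on_lower I r g"
    and "f \<in> borel_measurable (PiM I (\<lambda>_. lborel))"
  shows "(\<integral>\<^sup>+x. f (restrict (\<lambda>c. \<epsilon> c * x c + g c x) I) \<partial>PiM I (\<lambda>_. lborel))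
       = (\<integral>\<^sup>+x. f x \<partial>PiM I (\<lambda>_. lborel))"
  using assms
proof (induction "card I" arbitrary: I f)
  case 0
  then have "I = {}" by simp
  then show ?case by (intro nn_integral_cong) (simp add: space_PiM_empty)
next
  case (Suc k I f)
  interpret product_sigma_finite "\<lambda>_::nat. lborel::real measure" by standard
  have "finite I" "I \<noteq> {}" using Suc.hyps(2) Suc.prems(1) by auto
  then have "Max (r ` I) \<in> r ` I" by simp
  then obtain m where "m \<in> I" "r m = Max (r ` I)" by (metis imageE)
  then have m: "m \<in> I" "\<forall>i\<in>I. r i \<le> r m" using \<open>finite I\<close> by auto
  define I' where "I' = I - {m}"
  have I: "I = insert m I'" and m': "m \<notin> I'" and fin': "finite I'"
    using m \<open>finite I\<close> by (auto simp: I'_def)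
  define T' where "T' x = restrict (\<lambda>c. \<epsilon> c * x c + g c x) I'" for x
  define F where "F z = (\<integral>\<^sup>+y. f (z(m := y)) \<partial>lborel)" for z
  have T_upd: "restrict (\<lambda>c. \<epsilon> c * (x(m := y)) c + g c (x(m := y))) I = (T' x)(m := \<epsilon> m * y + g m x)"
    for x y using depends_on_lower_fun_upd[OF Suc.prems(4) _ m(2)[rule_format]] m'
    by (auto simp: I T'_def restrict_def)
  have "(\<lambda>x. f (restrict (\<lambda>c. \<epsilon> c * x c + g c x) I)) \<in> borel_measurable (PiM (insert m I') (\<lambda>_. lborel))"
    using depends_on_lower_measurable[OF Suc.prems(4)] unfolding I[symmetric]
    by (intro measurable_compose[OF _ Suc.prems(5)] measurable_restrict)
       (auto intro!: borel_measurable_add borel_measurable_times measurable_component_singleton)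
  from product_nn_integral_insert[OF fin' m' this]
  have "(\<integral>\<^sup>+x. f (restrict (\<lambda>c. \<epsilon> c * x c + g c x) I) \<partial>PiM I (\<lambda>_. lborel))
      = (\<integral>\<^sup>+x. \<integral>\<^sup>+y. f ((T' x)(m := \<epsilon> m * y + g m x)) \<partial>lborel \<partial>PiM I' (\<lambda>_. lborel))"
    by (simp only: I[symmetric] T_upd)
  also have "\<dots> = (\<integral>\<^sup>+x. F (T' x) \<partial>PiM I' (\<lambda>_. lborel))"
    unfolding F_def using Suc.prems(3,5) m(1) m' unfolding I
    by (intro nn_integral_cong nn_integral_fun_upd_affine) (auto simp: T'_def space_PiM)
  also have "\<dots> = (\<integral>\<^sup>+x. F x \<partial>PiM I' (\<lambda>_. lborel))"
    unfolding T'_def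
  proof (rule Suc.hyps(1))
    show "k = card I'" using Suc.hyps(2) I m' fin' by simp
    show "inj_on r I'" using Suc.prems(2) by (auto simp: I'_def inj_on_def)
    show "\<forall>c\<in>I'. \<bar>\<epsilon> c\<bar> = 1" using Suc.prems(3) I by blast
    show "depends_on_lower I' r g"
      unfolding I'_def using Suc.prems(4) m(2) by (rule depends_on_lower_remove_max)
    show "F \<in> borel_measurable (PiM I' (\<lambda>_. lborel))"
      unfolding F_def by (rule borel_measurable_nn_integral_fun_upd) (use Suc.prems(5) I in simp)
  qed (rule fin')
  also have "\<dots> = (\<integral>\<^sup>+x. f x \<partial>PiM I (\<lambda>_. lborel))"
    unfolding I F_def by (rule product_nn_integral_insert[OF fin' m' Suc.prems(5)[unfolded I], symmetric])
  finally show ?case .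
qed

lemma emeasure_PiM_hyperplane:
  fixes c :: "nat \<Rightarrow> real"
  assumes "finite I" and "m \<in> I" and "c m \<noteq> 0"
  shows "emeasure (PiM I (\<lambda>_. lborel)) {x \<in> space (PiM I (\<lambda>_. lborel)). (\<Sum>k\<in>I. c k * x k) = D} = 0"
proof -
  interpret product_sigma_finite "\<lambda>_::nat. lborel::real measure" by standard
  define I' where "I' = I - {m}"
  have I: "I = insert m I'" and m': "m \<notin> I'" and fin': "finite I'"
    using assms by (auto simp: I'_def)
  define H where "H = {x \<in> space (PiM I (\<lambda>_. lborel)). (\<Sum>k\<in>I. c k * x k) = D}"
  have H: "H \<in> sets (PiM I (\<lambda>_. lborel))" unfolding H_def by measurable
  have slice: "indicator H (x(m := y)) = (indicator {(D - (\<Sum>k\<in>I'. c k * x k)) / c m} y :: ennreal)"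
    if "x \<in> space (PiM I' (\<lambda>_. lborel))" for x y
  proof -
    have "x(m := y) \<in> space (PiM I (\<lambda>_. lborel))"
      using that by (auto simp: I space_PiM PiE_def extensional_def)
    moreover have "(\<Sum>k\<in>I. c k * (x(m := y)) k) = c m * y + (\<Sum>k\<in>I'. c k * x k)"
      unfolding I using m' fin' by (simp add: sum.insert) (intro sum.cong, auto)
    moreover have "c m * y + (\<Sum>k\<in>I'. c k * x k) = D \<longleftrightarrow> y = (D - (\<Sum>k\<in>I'. c k * x k)) / c m"
      using assms(3) by (auto simp: field_simps)
    ultimately show ?thesis by (simp add: H_def indicator_def)
  qed
  have "emeasure (PiM I (\<lambda>_. lborel)) H = (\<integral>\<^sup>+x. indicator H x \<partial>PiM I (\<lambda>_. lborel))"
    using H by simp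
  also have "\<dots> = (\<integral>\<^sup>+x. \<integral>\<^sup>+y. indicator H (x(m := y)) \<partial>lborel \<partial>PiM I' (\<lambda>_. lborel))"
    unfolding I by (rule product_nn_integral_insert[OF fin' m']) (use H I in simp)
  also have "\<dots> = 0"
    by (simp add: slice cong: nn_integral_cong)
  finally show ?thesis unfolding H_def .
qed

lemma vol_eq_0_if_hyperplane:
  fixes c :: "nat \<Rightarrow> real"
  assumes "k \<in> {1..n}" and "c k \<noteq> 0" and "\<forall>x\<in>Q. ip n c x = D"
  shows "vol n Q = 0"
proof -
  let ?M = "PiM {1..n} (\<lambda>_. lborel::real measure)"
  define H where "H = {x \<in> space ?M. (\<Sum>k\<in>{1..n}. c k * x k) = D}"
  have "H \<in> sets ?M" unfolding H_def by measurable
  moreover have "emeasure ?M H = 0"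
    unfolding H_def by (rule emeasure_PiM_hyperplane) (use assms in auto)
  ultimately have H: "H \<in> null_sets ?M" by (simp add: null_sets_def)
  have sub: "(\<lambda>x. restrict x {1..n}) ` Q \<subseteq> H"
    using assms(3) by (auto simp: H_def space_PiM ip_def)
  show ?thesis
  proof (cases "(\<lambda>x. restrict x {1..n}) ` Q \<in> sets ?M")
    case True
    then show ?thesis
      using null_sets_subset[OF H True sub] unfolding vol_def by (simp add: measure_def null_setsD1)
  next
    case False
    then show ?thesis unfolding vol_def by (simp add: measure_notin_sets)
  qed
qed

section \<open>Mixed volumes\<close>

lemma ip_conv_hull_eq:
  assumes "finite S" and "\<forall>a\<in>S. ip n c a = D" and "x \<in> conv_hull S"
  shows "ip n c x = D"
proof -
  obtain u where u: "\<forall>p\<in>S. 0 \<le> u p" "sum u S = 1" "x = (\<lambda>k. \<Sum>p\<in>S. u p * p k)"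
    using assms(3) unfolding conv_hull_def by blast
  have "ip n c x = (\<Sum>k\<in>{1..n}. \<Sum>p\<in>S. c k * (u p * p k))"
    unfolding ip_def u(3) by (simp add: sum_distrib_left)
  also have "\<dots> = (\<Sum>p\<in>S. u p * ip n c p)"
    unfolding ip_def by (subst sum.swap) (simp add: sum_distrib_left mult_ac)
  also have "\<dots> = D" using assms(2) u(2) by (simp add: sum_distrib_right[symmetric])
  finally show ?thesis .
qed

lemma ip_mink_sum_eq:
  assumes "\<forall>i\<in>S. \<forall>x\<in>P i. ip n c x = D i" and "x \<in> mink_sum P S"
  shows "ip n c x = (\<Sum>i\<in>S. D i)"
proof -
  obtain y where y: "x = (\<lambda>k. \<Sum>i\<in>S. y i k)" "\<forall>i\<in>S. y i \<in> P i"
    using assms(2) unfolding mink_sum_def by blast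
  have "ip n c x = (\<Sum>i\<in>S. ip n c (y i))"
    unfolding ip_def y(1) by (subst sum.swap) (simp add: sum_distrib_left)
  then show ?thesis using assms(1) y(2) by simp
qed

lemma mixed_volume_eq_0_if_hyperplane:
  fixes c :: "nat \<Rightarrow> real"
  assumes "k \<in> {1..n}" and "c k \<noteq> 0" and "\<forall>i\<in>{1..n}. \<forall>x\<in>P i. ip n c x = D i"
  shows "mixed_volume n P = 0"
proof -
  have "vol n (mink_sum P S) = 0" if "S \<in> Pow {1..n}" for S
  proof (rule vol_eq_0_if_hyperplane[where c = c and k = k])
    show "k \<in> {1..n}" "c k \<noteq> 0" by (fact assms(1), fact assms(2))
    show "\<forall>x\<in>mink_sum P S. ip n c x = sum D S"
      using assms(3) that by (intro ballI ip_mink_sum_eq) auto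
  qed
  then show ?thesis unfolding mixed_volume_def by simp
qed

text \<open>The \<open>card A\<close>-th forward difference of \<open>t \<mapsto> t ^ m\<close>.\<close>

definition alt_pow_sum :: "'a set \<Rightarrow> nat \<Rightarrow> real \<Rightarrow> real" where
  "alt_pow_sum A m t = (\<Sum>S\<in>Pow A. (-1) ^ (card A - card S) * (real (card S) + t) ^ m)"

lemma pow_add_1_diff: "(x + 1 :: real) ^ m - x ^ m = (\<Sum>i<m. real (m choose i) * x ^ i)"
proof -
  have "(x + 1 :: real) ^ m = (\<Sum>i\<le>m. real (m choose i) * x ^ i)"
    by (subst binomial_ring) simp
  also have "\<dots> = (\<Sum>i<m. real (m choose i) * x ^ i) + x ^ m"
    by (simp add: lessThan_Suc_atMost[symmetric])
  finally show ?thesis by simp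
qed

lemma alt_pow_sum_insert:
  assumes "finite A" and "a \<notin> A"
  shows "alt_pow_sum (insert a A) m t = (\<Sum>i<m. real (m choose i) * alt_pow_sum A i t)"
proof -
  have card_ins: "card (insert a S) = Suc (card S)" if "S \<in> Pow A" for S
    using that assms finite_subset by (subst card_insert_disjoint) auto
  have le: "card S \<le> card A" if "S \<in> Pow A" for S
    using that assms(1) by (simp add: card_mono)
  have "alt_pow_sum (insert a A) m t
      = (\<Sum>S\<in>Pow A. (-1) ^ (Suc (card A) - card S) * (real (card S) + t) ^ m)
        + (\<Sum>S\<in>insert a ` Pow A. (-1) ^ (Suc (card A) - card S) * (real (card S) + t) ^ m)"
    unfolding alt_pow_sum_def Pow_insert using assms
    by (subst sum.union_disjoint) auto
  also have "(\<Sum>S\<in>insert a ` Pow A. (-1) ^ (Suc (card A) - card S) * (real (card S) + t) ^ m)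
      = (\<Sum>S\<in>Pow A. (-1) ^ (card A - card S) * (real (card S) + t + 1) ^ m)"
    using assms(2) by (subst sum.reindex) (auto simp: inj_on_def card_ins algebra_simps intro!: sum.cong)
  also have "(\<Sum>S\<in>Pow A. (-1) ^ (Suc (card A) - card S) * (real (card S) + t) ^ m)
      = - (\<Sum>S\<in>Pow A. (-1) ^ (card A - card S) * (real (card S) + t) ^ m)"
    by (simp add: sum_negf[symmetric] Suc_diff_le le)
  finally have "alt_pow_sum (insert a A) m t
      = (\<Sum>S\<in>Pow A. (-1) ^ (card A - card S) * ((real (card S) + t + 1) ^ m - (real (card S) + t) ^ m))"
    by (simp add: sum_subtractf[symmetric] algebra_simps)
  also have "\<dots> = (\<Sum>S\<in>Pow A. \<Sum>i<m. (-1) ^ (card A - card S) * (real (m choose i) * (real (card S) + t) ^ i))"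
    by (simp add: pow_add_1_diff sum_distrib_left)
  also have "\<dots> = (\<Sum>i<m. real (m choose i) * alt_pow_sum A i t)"
    unfolding alt_pow_sum_def by (subst sum.swap) (simp add: sum_distrib_left mult.left_commute)
  finally show ?thesis .
qed

lemma alt_pow_sum_eq:
  assumes "finite A"
  shows "(\<forall>m<card A. alt_pow_sum A m t = 0) \<and> alt_pow_sum A (card A) t = fact (card A)"
  using assms
proof (induction rule: finite_induct)
  case empty
  show ?case by (simp add: alt_pow_sum_def)
next
  case (insert a A)
  have "alt_pow_sum (insert a A) m t = 0" if "m \<le> card A" for m
    using insert that by (simp add: alt_pow_sum_insert)
  moreover have "alt_pow_sum (insert a A) (Suc (card A)) t = fact (Suc (card A))"
    using insert by (simp add: alt_pow_sum_insert)
  ultimately show ?case using insert by (simp add: less_Suc_eq_le)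
qed

lemma mixed_volume_const:
  assumes "\<And>S. S \<subseteq> {1..n} \<Longrightarrow> vol n (mink_sum (\<lambda>_. P) S) = real (card S) ^ n * V"
  shows "mixed_volume n (\<lambda>_. P) = fact n * V"
proof -
  have "mixed_volume n (\<lambda>_. P) = alt_pow_sum {1..n} n 0 * V"
    unfolding mixed_volume_def alt_pow_sum_def using assms
    by (simp add: sum_distrib_right mult.assoc)
  also have "\<dots> = fact n * V" using alt_pow_sum_eq[of "{1..n}" 0] by simp
  finally show ?thesis .
qed

section \<open>The cycle and the tropical polynomial \<open>h\<close>\<close>

definition edge_vec :: "nat \<Rightarrow> nat \<Rightarrow> nat \<Rightarrow> real" where
  "edge_vec N e = (\<lambda>k. unitv e k - unitv (Suc e mod N) k)"

definition edge_diff :: "nat \<Rightarrow> (nat \<Rightarrow> real) \<Rightarrow> nat \<Rightarrow> real" where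
  "edge_diff N w e = ip (N - 1) w (edge_vec N e)"

definition point_of_diffs :: "nat \<Rightarrow> (nat \<Rightarrow> real) \<Rightarrow> nat \<Rightarrow> real" where
  "point_of_diffs N \<delta> = (\<lambda>k. if k \<in> {1..N - 1} then (\<Sum>e\<in>{k..N - 1}. \<delta> e) else 0)"

lemma edge_vec_apply:
  assumes "N = Suc n" and "e \<le> n" and "k \<in> {1..n}"
  shows "edge_vec N e k = (if k = e then 1 else 0) - (if k = Suc e then 1 else 0)"
proof (cases "e < n")
  case True
  then have "Suc e mod N = Suc e" using assms by simp
  then show ?thesis using assms by (auto simp: edge_vec_def unitv_def)
next
  case False
  then have "e = n" "Suc e mod N = 0" using assms by simp_all
  then show ?thesis using assms by (auto simp: edge_vec_def unitv_def)
qed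

lemma ip_unitv: "w \<in> pts n \<Longrightarrow> ip n w (unitv i) = w i"
  unfolding ip_def unitv_def pts_def
  by (cases "i \<in> {1..n}") (auto simp: if_distrib cong: if_cong)

lemma ip_diff: "ip n w (\<lambda>k. a k - b k) = ip n w a - ip n w b"
  unfolding ip_def by (simp add: algebra_simps sum_subtractf)

lemma ip_scale: "ip n w (\<lambda>k. c * a k) = c * ip n w a"
  unfolding ip_def by (simp add: algebra_simps sum_distrib_left)

lemma ip_uminus: "ip n w (\<lambda>k. - a k) = - ip n w a"
  unfolding ip_def by (simp add: sum_negf)

lemma ip_zero: "ip n w (\<lambda>k. 0) = 0"
  unfolding ip_def by simp

lemma edge_diff_eq:
  assumes "w \<in> pts n" and "N = Suc n"
  shows "edge_diff N w e = w e - w (Suc e mod N)"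
  using assms ip_unitv[OF assms(1)] unfolding edge_diff_def edge_vec_def
  by (simp add: ip_diff)

lemma edge_diff_eq_Suc:
  assumes "w \<in> pts n" and "N = Suc n" and "e < N"
  shows "edge_diff N w e = w e - w (Suc e)"
proof -
  have "w (Suc e mod N) = w (Suc e)"
    using assms by (cases "Suc e = N") (auto simp: pts_def)
  then show ?thesis using edge_diff_eq[OF assms(1,2)] by simp
qed

lemma sum_edge_diff:
  assumes "w \<in> pts n" and "N = Suc n"
  shows "(\<Sum>e<N. edge_diff N w e) = 0"
proof -
  have "(\<Sum>e<N. edge_diff N w e) = (\<Sum>e<N. w e - w (Suc e))"
    using edge_diff_eq_Suc[OF assms] by simp
  also have "\<dots> = w 0 - w N" by (rule sum_lessThan_telescope')
  also have "\<dots> = 0" using assms by (simp add: pts_def)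
  finally show ?thesis .
qed

lemma point_of_diffs_in_pts: "point_of_diffs N \<delta> \<in> pts (N - 1)"
  unfolding point_of_diffs_def pts_def by auto

lemma edge_diff_point_of_diffs:
  assumes N: "N = Suc n" and sum: "(\<Sum>e<N. \<delta> e) = 0" and e: "e < N"
  shows "edge_diff N (point_of_diffs N \<delta>) e = \<delta> e"
proof -
  have tail: "(\<Sum>i\<in>{e..n}. \<delta> i) = \<delta> e + (\<Sum>i\<in>{Suc e..n}. \<delta> i)"
    using e N by (intro sum.atLeast_Suc_atMost) simp
  have "(\<Sum>i\<in>{0..n}. \<delta> i) = 0"
    using sum N by (simp add: lessThan_Suc_atMost atLeast0AtMost)
  then have "point_of_diffs N \<delta> e = \<delta> e + point_of_diffs N \<delta> (Suc e)"
    using e N tail by (cases "e = 0") (auto simp: point_of_diffs_def)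
  then show ?thesis
    using edge_diff_eq_Suc[OF point_of_diffs_in_pts[of N \<delta>, unfolded N diff_Suc_1] N e] by (simp add: N)
qed

lemma point_of_diffs_edge_diff:
  assumes w: "w \<in> pts n" and N: "N = Suc n"
  shows "point_of_diffs N (edge_diff N w) = w"
proof
  fix k
  show "point_of_diffs N (edge_diff N w) k = w k"
  proof (cases "k \<in> {1..n}")
    case True
    have "(\<Sum>e\<in>{k..n}. edge_diff N w e) = - (\<Sum>e\<in>{k..n}. w (Suc e) - w e)"
      using edge_diff_eq_Suc[OF w N] N by (simp add: sum_negf[symmetric])
    also have "\<dots> = w k" using sum_Suc_diff[of k n w] True w by (simp add: pts_def)
    finally show ?thesis using True N by (simp add: point_of_diffs_def)
  next
    case False
    then show ?thesis using w N by (auto simp: point_of_diffs_def pts_def)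
  qed
qed

lemma point_of_diffs_cong: "(\<And>e. e < N \<Longrightarrow> \<delta> e = \<delta>' e) \<Longrightarrow> point_of_diffs N \<delta> = point_of_diffs N \<delta>'"
  unfolding point_of_diffs_def by (intro ext) (auto intro!: sum.cong)

lemma point_of_diffs_nonzero:
  assumes "N = Suc n" and "(\<Sum>e<N. \<delta> e) = 0" and "e < N" and "\<delta> e \<noteq> 0"
  shows "\<exists>k\<in>{1..n}. point_of_diffs N \<delta> k \<noteq> 0"
proof (rule ccontr)
  assume "\<not> ?thesis"
  then have "edge_diff N (point_of_diffs N \<delta>) e = 0"
    using assms(1) by (simp add: edge_diff_def ip_def)
  then show False using edge_diff_point_of_diffs[OF assms(1-3)] assms(4) by simp
qed

definition edge_val :: "nat \<Rightarrow> nat \<Rightarrow> real" where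
  "edge_val N e = (if even N \<and> e = 0 then 2 else 1)"

lemma edge_val_ge_1: "edge_val N e \<ge> 1"
  by (simp add: edge_val_def)

lemma val_a_edge:
  assumes N: "N \<ge> 3" and e: "e < N" and ij: "{i, j} = {e, Suc e mod N}"
  shows "val_a N i j = edge_val N e"
proof -
  have "{i, j} = {0, 1} \<longleftrightarrow> e = 0"
  proof
    assume h: "{i, j} = {0, 1}"
    show "e = 0"
    proof (rule ccontr)
      assume "e \<noteq> 0"
      have "e \<in> {0, 1}" using h ij by (metis insertI1)
      then have "e = 1" using \<open>e \<noteq> 0\<close> by simp
      then have "Suc e mod N = 2" using N by simp
      then show False using h ij \<open>e = 1\<close> by (simp add: doubleton_eq_iff)
    qed
  next
    assume "e = 0"
    then show "{i, j} = {0, 1}" using ij N by simp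
  qed
  then show ?thesis by (simp add: val_a_def edge_val_def)
qed

lemma mem_cycle_edges:
  "{i, j} \<in> cycle_edges N \<longleftrightarrow> (\<exists>e<N. (i = e \<and> j = Suc e mod N) \<or> (i = Suc e mod N \<and> j = e))"
  unfolding cycle_edges_def by (auto simp: doubleton_eq_iff)

lemma h_terms_eq:
  assumes N: "N \<ge> 3"
  shows "h_terms N = insert (\<lambda>_. 0, 0)
    ((\<lambda>e. (edge_vec N e, edge_val N e)) ` {..<N} \<union> (\<lambda>e. (\<lambda>k. - edge_vec N e k, edge_val N e)) ` {..<N})"
proof -
  have "{(\<lambda>k. unitv i k - unitv j k, val_a N i j) | i j. {i, j} \<in> cycle_edges N}
      = (\<lambda>e. (edge_vec N e, edge_val N e)) ` {..<N} \<union> (\<lambda>e. (\<lambda>k. - edge_vec N e k, edge_val N e)) ` {..<N}"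
    (is "?L = ?R")
  proof (intro equalityI subsetI)
    fix t assume "t \<in> ?L"
    then obtain i j e where t: "t = (\<lambda>k. unitv i k - unitv j k, val_a N i j)" and e: "e < N"
      and ij: "(i = e \<and> j = Suc e mod N) \<or> (i = Suc e mod N \<and> j = e)"
      unfolding mem_cycle_edges by blast
    have "val_a N i j = edge_val N e" using ij by (intro val_a_edge[OF N e]) auto
    then show "t \<in> ?R" using t e ij by (auto simp: edge_vec_def)
  next
    fix t assume "t \<in> ?R"
    then obtain e where e: "e < N"
      and t: "t = (edge_vec N e, edge_val N e) \<or> t = (\<lambda>k. - edge_vec N e k, edge_val N e)"
      by (auto simp del: uminus_apply)
    have "val_a N e (Suc e mod N) = edge_val N e" "val_a N (Suc e mod N) e = edge_val N e"
      by (intro val_a_edge[OF N e]; auto)+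
    moreover have "{e, Suc e mod N} \<in> cycle_edges N" "{Suc e mod N, e} \<in> cycle_edges N"
      using e unfolding mem_cycle_edges by blast+
    ultimately show "t \<in> ?L"
      using t by (elim disjE) (intro CollectI exI conjI; simp add: edge_vec_def; fail)+
  qed
  then show ?thesis unfolding h_terms_def by simp
qed

lemma finite_h_terms: "N \<ge> 3 \<Longrightarrow> finite (h_terms N)"
  by (simp add: h_terms_eq)

section \<open>The unimodular simplex\<close>

locale signed_simplex =
  fixes N n j :: nat and \<sigma> :: "nat \<Rightarrow> real"
  assumes N: "N = Suc n" and j: "j \<le> n"
    and sign: "\<And>e. e \<le> n \<Longrightarrow> e \<noteq> j \<Longrightarrow> \<sigma> e = 1 \<or> \<sigma> e = -1"
begin

abbreviation edges :: "nat set" where "edges \<equiv> {0..n} - {j}"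

abbreviation lebn :: "(nat \<Rightarrow> real) measure" where "lebn \<equiv> PiM {1..n} (\<lambda>_. lborel)"

definition signed_edge_vec :: "nat \<Rightarrow> nat \<Rightarrow> real" where
  "signed_edge_vec e = (\<lambda>k. \<sigma> e * edge_vec N e k)"

definition simplex_vertices :: "(nat \<Rightarrow> real) set" where
  "simplex_vertices = insert (\<lambda>_. 0) (signed_edge_vec ` edges)"

definition dilated_simplex :: "real \<Rightarrow> (nat \<Rightarrow> real) set" where
  "dilated_simplex t = {(\<lambda>k. \<Sum>e\<in>edges. l e * signed_edge_vec e k) | l. (\<forall>e\<in>edges. 0 \<le> l e) \<and> sum l edges \<le> t}"

definition std_simplex :: "real \<Rightarrow> (nat \<Rightarrow> real) set" where
  "std_simplex t = {y. (\<forall>c\<in>{1..n}. 0 \<le> y c) \<and> sum y {1..n} \<le> t}"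

definition antidiff :: "(nat \<Rightarrow> real) \<Rightarrow> nat \<Rightarrow> real" where
  "antidiff x e = (if j < e then (\<Sum>i\<in>{Suc j..e}. x i) else - (\<Sum>i\<in>{Suc e..j}. x i))"

definition coord_edge :: "nat \<Rightarrow> nat" where
  "coord_edge c = (if c \<le> j then c - 1 else c)"

text \<open>The coordinates of a point with respect to the basis \<open>signed_edge_vec e\<close>, \<open>e \<in> edges\<close>, listed in
  the order \<open>coord_edge\<close>.\<close>

definition simplex_coords :: "(nat \<Rightarrow> real) \<Rightarrow> nat \<Rightarrow> real" where
  "simplex_coords x = restrict (\<lambda>c. \<sigma> (coord_edge c) * antidiff x (coord_edge c)) {1..n}"

lemma n_less_N: "n < N"
  using N by simp

lemma N_minus_1: "N - 1 = n"
  using N by simp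

lemma sign_sq: "e \<in> edges \<Longrightarrow> \<sigma> e * \<sigma> e = 1"
  using sign by fastforce

lemma sum_edge_vec:
  assumes k: "k \<in> {1..n}" and "M j = 0"
  shows "(\<Sum>e\<in>edges. M e * edge_vec N e k) = M k - M (k - 1)"
proof -
  have "(\<Sum>e\<in>edges. M e * edge_vec N e k) = (\<Sum>e\<in>{0..n}. M e * edge_vec N e k)"
    using assms j by (intro sum.mono_neutral_left) auto
  also have "\<dots> = (\<Sum>e\<in>{0..n}. (if e = k then M e else 0) - (if e = k - 1 then M e else 0))"
    using k by (intro sum.cong refl) (auto simp: edge_vec_apply[OF N])
  also have "\<dots> = M k - M (k - 1)"
    using k by (simp add: sum_subtractf) linarith
  finally show ?thesis .
qed

lemma antidiff_at_j: "antidiff x j = 0"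
  by (simp add: antidiff_def)

lemma antidiff_step:
  assumes "k \<in> {1..n}"
  shows "antidiff x k - antidiff x (k - 1) = x k"
proof (cases "j < k")
  case True
  show ?thesis
  proof (cases "j < k - 1")
    case True
    then have "{Suc j..k} = insert k {Suc j..k - 1}" using assms by auto
    then show ?thesis using True \<open>j < k\<close> by (simp add: antidiff_def)
  next
    case False
    then have "k = Suc j" using True by simp
    then show ?thesis by (simp add: antidiff_def)
  qed
next
  case False
  then have "{k..j} = insert k {Suc k..j}" and "Suc (k - 1) = k" using assms by auto
  then show ?thesis using False by (simp add: antidiff_def)
qed

lemma antidiff_unique:
  assumes "M j = 0" and "\<And>k. k \<in> {1..n} \<Longrightarrow> x k = M k - M (k - 1)" and "e \<le> n"
  shows "antidiff x e = M e"
proof -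
  define D where "D e = antidiff x e - M e" for e
  have "D (Suc k) = D k" if "Suc k \<le> n" for k
    using antidiff_step[of "Suc k" x] assms(2)[of "Suc k"] that by (simp add: D_def)
  then have const: "D k = D 0" if "k \<le> n" for k
    using that by (induction k) auto
  have "D e = D j" using const[OF assms(3)] const[OF j] by simp
  then show ?thesis using assms(1) by (simp add: D_def antidiff_at_j)
qed

lemma antidiff_restrict: "e \<le> n \<Longrightarrow> antidiff (restrict x {1..n}) e = antidiff x e"
  using j unfolding antidiff_def by (auto intro!: sum.cong)

lemma bij_coord_edge: "bij_betw coord_edge {1..n} edges"
proof (rule bij_betwI[where g = "\<lambda>e. if e < j then Suc e else e"])
  show "coord_edge \<in> {1..n} \<rightarrow> edges" using j by (auto simp: coord_edge_def split: if_splits)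
  show "(\<lambda>e. if e < j then Suc e else e) \<in> edges \<rightarrow> {1..n}" using j by auto
qed (auto simp: coord_edge_def)

lemma coord_edge_in: "c \<in> {1..n} \<Longrightarrow> coord_edge c \<in> edges"
  using bij_coord_edge bij_betwE by blast

lemma sum_edges_reindex: "sum f edges = (\<Sum>c\<in>{1..n}. f (coord_edge c))"
  using sum.reindex_bij_betw[OF bij_coord_edge, of f] by simp

lemma simplex_coords_combination:
  assumes "c \<in> {1..n}"
  shows "simplex_coords (restrict (\<lambda>k. \<Sum>e\<in>edges. l e * signed_edge_vec e k) {1..n}) c = l (coord_edge c)"
proof -
  define M where "M e = (if e = j then 0 else \<sigma> e * l e)" for e
  have "(\<Sum>e\<in>edges. l e * signed_edge_vec e k) = M k - M (k - 1)" if "k \<in> {1..n}" for k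
  proof -
    have "(\<Sum>e\<in>edges. l e * signed_edge_vec e k) = (\<Sum>e\<in>edges. M e * edge_vec N e k)"
      by (intro sum.cong) (auto simp: M_def signed_edge_vec_def)
    then show ?thesis using sum_edge_vec[OF that, of M] by (simp add: M_def)
  qed
  then have "antidiff (\<lambda>k. \<Sum>e\<in>edges. l e * signed_edge_vec e k) e = M e" if "e \<le> n" for e
    using that by (intro antidiff_unique) (auto simp: M_def)
  moreover have "coord_edge c \<in> edges" using coord_edge_in[OF assms] .
  ultimately show ?thesis
    using assms sign_sq[of "coord_edge c"] antidiff_restrict[of "coord_edge c"]
    by (simp add: simplex_coords_def M_def mult.assoc[symmetric])
qed

lemma combination_simplex_coords:
  assumes "z \<in> space lebn"
  shows "restrict (\<lambda>k. \<Sum>e\<in>edges. (\<sigma> e * antidiff z e) * signed_edge_vec e k) {1..n} = z"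
proof
  fix k
  show "restrict (\<lambda>k. \<Sum>e\<in>edges. (\<sigma> e * antidiff z e) * signed_edge_vec e k) {1..n} k = z k"
  proof (cases "k \<in> {1..n}")
    case True
    have "(\<Sum>e\<in>edges. (\<sigma> e * antidiff z e) * signed_edge_vec e k) = (\<Sum>e\<in>edges. antidiff z e * edge_vec N e k)"
    proof (rule sum.cong[OF refl])
      fix e assume "e \<in> edges"
      have "\<sigma> e * antidiff z e * signed_edge_vec e k = (\<sigma> e * \<sigma> e) * (antidiff z e * edge_vec N e k)"
        by (simp add: signed_edge_vec_def mult_ac)
      then show "\<sigma> e * antidiff z e * signed_edge_vec e k = antidiff z e * edge_vec N e k"
        using sign_sq[OF \<open>e \<in> edges\<close>] by simp
    qed
    also have "\<dots> = z k"
      using sum_edge_vec[OF True, of "antidiff z"] antidiff_at_j antidiff_step[OF True] by simp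
    finally show ?thesis using True by simp
  next
    case False
    then show ?thesis using assms by (auto simp: space_PiM PiE_def extensional_def)
  qed
qed

lemma restrict_dilated_simplex:
  "(\<lambda>x. restrict x {1..n}) ` dilated_simplex t = {x \<in> space lebn. simplex_coords x \<in> std_simplex t}"
proof (intro equalityI subsetI)
  fix z assume "z \<in> (\<lambda>x. restrict x {1..n}) ` dilated_simplex t"
  then obtain l where z: "z = restrict (\<lambda>k. \<Sum>e\<in>edges. l e * signed_edge_vec e k) {1..n}"
    and l: "\<forall>e\<in>edges. 0 \<le> l e" "sum l edges \<le> t"
    unfolding dilated_simplex_def by blast
  have coords: "simplex_coords z c = l (coord_edge c)" if "c \<in> {1..n}" for c
    unfolding z using that by (rule simplex_coords_combination)
  have "sum (simplex_coords z) {1..n} = sum l edges"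
    unfolding sum_edges_reindex[of l] using coords by (intro sum.cong) auto
  moreover have "\<forall>c\<in>{1..n}. 0 \<le> simplex_coords z c"
    using l coord_edge_in coords by auto
  ultimately show "z \<in> {x \<in> space lebn. simplex_coords x \<in> std_simplex t}"
    using l by (auto simp: std_simplex_def z space_PiM)
next
  fix z assume z: "z \<in> {x \<in> space lebn. simplex_coords x \<in> std_simplex t}"
  define l where "l e = \<sigma> e * antidiff z e" for e
  have l_coord_edge: "l (coord_edge c) = simplex_coords z c" if "c \<in> {1..n}" for c
    using that by (simp add: simplex_coords_def l_def)
  have "\<forall>e\<in>edges. 0 \<le> l e"
  proof
    fix e assume "e \<in> edges"
    then obtain c where "c \<in> {1..n}" "e = coord_edge c"
      using bij_betw_imp_surj_on[OF bij_coord_edge] by blast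
    then show "0 \<le> l e" using z l_coord_edge by (simp add: std_simplex_def)
  qed
  moreover have "sum l edges \<le> t"
    using z l_coord_edge unfolding sum_edges_reindex by (simp add: std_simplex_def)
  ultimately have x: "(\<lambda>k. \<Sum>e\<in>edges. l e * signed_edge_vec e k) \<in> dilated_simplex t"
    unfolding dilated_simplex_def by blast
  have "restrict (\<lambda>k. \<Sum>e\<in>edges. l e * signed_edge_vec e k) {1..n} = z"
    using combination_simplex_coords z by (simp add: l_def)
  from image_eqI[where f = "\<lambda>x. restrict x {1..n}", OF this[symmetric] x]
  show "z \<in> (\<lambda>x. restrict x {1..n}) ` dilated_simplex t" .
qed

text \<open>Listing the coordinates \<open>c \<le> j\<close> in decreasing order after those \<open>c > j\<close> in increasing
  order makes \<open>simplex_coords\<close> triangular with diagonal entries \<open>\<plusminus>1\<close>.\<close>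

definition coord_rank :: "nat \<Rightarrow> nat" where
  "coord_rank c = (if c \<le> j then 2 * N - c else c)"

definition coord_range :: "nat \<Rightarrow> nat set" where
  "coord_range c = (if c \<le> j then {Suc c..j} else {Suc j..<c})"

definition coord_sign :: "nat \<Rightarrow> real" where
  "coord_sign c = (if c \<le> j then - \<sigma> (c - 1) else \<sigma> c)"

lemma simplex_coords_triangular:
  "simplex_coords x = restrict (\<lambda>c. coord_sign c * x c + coord_sign c * (\<Sum>i\<in>coord_range c. x i)) {1..n}"
proof
  fix c
  show "simplex_coords x c = restrict (\<lambda>c. coord_sign c * x c + coord_sign c * (\<Sum>i\<in>coord_range c. x i)) {1..n} c"
  proof (cases "c \<in> {1..n}")
    case c: True
    show ?thesis
    proof (cases "c \<le> j")
      case True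
      then have "{Suc (c - 1)..j} = insert c {Suc c..j}" using c by auto
      then show ?thesis using True c
        by (simp add: simplex_coords_def coord_edge_def antidiff_def coord_sign_def coord_range_def algebra_simps)
    next
      case False
      then have "{Suc j..c} = insert c {Suc j..<c}" by auto
      then show ?thesis using False c
        by (simp add: simplex_coords_def coord_edge_def antidiff_def coord_sign_def coord_range_def algebra_simps)
    qed
  next
    case False
    then show ?thesis by (simp only: simplex_coords_def restrict_apply False if_False)
  qed
qed

lemma coord_range_lower: "c \<in> {1..n} \<Longrightarrow> coord_range c \<subseteq> {i \<in> {1..n}. coord_rank i < coord_rank c}"
  using j n_less_N by (auto simp: coord_range_def coord_rank_def)

lemma abs_coord_sign:
  assumes "c \<in> {1..n}"
  shows "\<bar>coord_sign c\<bar> = 1"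
proof (cases "c \<le> j")
  case True
  then have "\<sigma> (c - 1) = 1 \<or> \<sigma> (c - 1) = -1" using assms by (intro sign) auto
  then show ?thesis using True by (auto simp: coord_sign_def)
next
  case False
  then have "\<sigma> c = 1 \<or> \<sigma> c = -1" using assms by (intro sign) auto
  then show ?thesis using False by (auto simp: coord_sign_def)
qed

lemma inj_on_coord_rank: "inj_on coord_rank {1..n}"
  using j n_less_N unfolding inj_on_def coord_rank_def by (auto split: if_splits)

lemma depends_on_lower_coords:
  "depends_on_lower {1..n} coord_rank (\<lambda>c x. coord_sign c * (\<Sum>i\<in>coord_range c. x i))"
  unfolding depends_on_lower_def
proof
  fix c assume "c \<in> {1..n}"
  then have sub: "coord_range c \<subseteq> {i \<in> {1..n}. coord_rank i < coord_rank c}"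
    by (rule coord_range_lower)
  then have "coord_sign c * (\<Sum>i\<in>coord_range c. x i)
      = coord_sign c * (\<Sum>i\<in>coord_range c. restrict x {i \<in> {1..n}. coord_rank i < coord_rank c} i)" for x
    by (intro arg_cong[where f = "(*) (coord_sign c)"] sum.cong) auto
  moreover have "(\<lambda>x. \<Sum>i\<in>coord_range c. x i)
      \<in> borel_measurable (PiM {i \<in> {1..n}. coord_rank i < coord_rank c} (\<lambda>_. lborel))"
    using sub by (intro borel_measurable_sum) (auto intro!: measurable_component_singleton)
  ultimately show "(\<forall>x. coord_sign c * (\<Sum>i\<in>coord_range c. x i)
      = coord_sign c * (\<Sum>i\<in>coord_range c. restrict x {i \<in> {1..n}. coord_rank i < coord_rank c} i))
    \<and> (\<lambda>x. coord_sign c * (\<Sum>i\<in>coord_range c. x i))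
      \<in> borel_measurable (PiM {i \<in> {1..n}. coord_rank i < coord_rank c} (\<lambda>_. lborel))"
    using borel_measurable_times[OF borel_measurable_const] by blast
qed

lemma measurable_simplex_coords: "simplex_coords \<in> measurable lebn lebn"
  unfolding simplex_coords_triangular
  by (intro measurable_restrict borel_measurable_add borel_measurable_times borel_measurable_sum
      measurable_component_singleton) (use j in \<open>auto simp: coord_range_def\<close>)

lemma emeasure_simplex_coords_preimage:
  assumes "t \<ge> 0"
  shows "emeasure lebn {x \<in> space lebn. simplex_coords x \<in> std_simplex t} = ennreal (t ^ n / fact n)"
proof -
  define S where "S = std_simplex t \<inter> space lebn"
  have S: "S \<in> sets lebn"
  proof -
    have "S = {x \<in> space lebn. (\<forall>c\<in>{1..n}. 0 \<le> x c) \<and> sum x {1..n} \<le> t}"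
      by (auto simp: S_def std_simplex_def)
    also have "\<dots> \<in> sets lebn" by measurable
    finally show ?thesis .
  qed
  have coords_space: "simplex_coords x \<in> space lebn" for x
    by (simp add: simplex_coords_def space_PiM)
  have preimage: "{x \<in> space lebn. simplex_coords x \<in> std_simplex t} = simplex_coords -` S \<inter> space lebn"
    using coords_space by (auto simp: S_def)
  have "emeasure lebn {x \<in> space lebn. simplex_coords x \<in> std_simplex t}
      = (\<integral>\<^sup>+x. indicator (simplex_coords -` S \<inter> space lebn) x \<partial>lebn)"
    unfolding preimage using measurable_sets[OF measurable_simplex_coords S] by simp
  also have "\<dots> = (\<integral>\<^sup>+x. indicator S (simplex_coords x) \<partial>lebn)"
    by (intro nn_integral_cong) (simp add: indicator_def)
  also have "\<dots> = (\<integral>\<^sup>+x. indicator S x \<partial>lebn)"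
    unfolding simplex_coords_triangular
    using inj_on_coord_rank abs_coord_sign depends_on_lower_coords S
    by (intro nn_integral_PiM_triangular[where r = coord_rank]) auto
  also have "\<dots> = emeasure lebn S" using S by simp
  also have "\<dots> = ennreal (t ^ n / fact n)"
    using emeasure_std_simplex_aux[of "{1..n}" t] assms by (simp add: S_def std_simplex_def)
  finally show ?thesis .
qed

lemma vol_dilated_simplex:
  assumes "t \<ge> 0"
  shows "vol n (dilated_simplex t) = t ^ n / fact n"
  unfolding vol_def restrict_dilated_simplex
  using emeasure_simplex_coords_preimage[OF assms] assms by (simp add: measure_def)

lemma ip_signed_edge_vec_separating:
  assumes "e \<in> edges" and "e' \<in> edges"
  shows "ip n (point_of_diffs N (\<lambda>i. if i = e then 1 else if i = j then -1 else 0)) (signed_edge_vec e')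
    = (if e' = e then \<sigma> e else 0)"
proof -
  define \<delta> :: "nat \<Rightarrow> real" where "\<delta> i = (if i = e then 1 else if i = j then -1 else 0)" for i
  have "e < N" "j < N" "e \<noteq> j" using assms j N by auto
  then have "(\<Sum>i<N. \<delta> i) = (\<Sum>i<N. (if i = e then 1 else 0) - (if i = j then 1 else 0))"
    unfolding \<delta>_def by (intro sum.cong) auto
  also have "\<dots> = 0" using \<open>e < N\<close> \<open>j < N\<close> by (simp add: sum_subtractf)
  finally have "(\<Sum>i<N. \<delta> i) = 0" .
  then have "ip n (point_of_diffs N \<delta>) (signed_edge_vec e') = \<sigma> e' * \<delta> e'"
    using edge_diff_point_of_diffs[OF N _, of \<delta> e'] assms(2) n_less_N
    by (simp add: signed_edge_vec_def ip_scale edge_diff_def N_minus_1[unfolded One_nat_def])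
  then show ?thesis using assms(2) unfolding \<delta>_def[abs_def] by simp
qed

lemma signed_edge_vec_nonzero: "e \<in> edges \<Longrightarrow> signed_edge_vec e \<noteq> (\<lambda>_. 0)"
  using ip_signed_edge_vec_separating[of e e] sign[of e] by (auto simp: ip_zero)

lemma inj_on_signed_edge_vec: "inj_on signed_edge_vec edges"
proof (rule inj_onI)
  fix a b assume "a \<in> edges" "b \<in> edges" "signed_edge_vec a = signed_edge_vec b"
  show "a = b"
  proof (rule ccontr)
    assume "a \<noteq> b"
    then show False
      using ip_signed_edge_vec_separating[of a a] ip_signed_edge_vec_separating[of a b] sign[of a] \<open>a \<in> edges\<close> \<open>b \<in> edges\<close> \<open>signed_edge_vec a = signed_edge_vec b\<close>
      by auto
  qed
qed

lemma conv_hull_simplex_vertices: "conv_hull simplex_vertices = dilated_simplex 1"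
proof (intro equalityI subsetI)
  have fin: "finite (signed_edge_vec ` edges)" by simp
  have nin: "(\<lambda>_. 0) \<notin> signed_edge_vec ` edges"
  proof
    assume "(\<lambda>_. 0) \<in> signed_edge_vec ` edges"
    then obtain e where e: "e \<in> edges" and zero: "(\<lambda>_. 0) = signed_edge_vec e" by (rule imageE)
    from signed_edge_vec_nonzero[OF e] zero[symmetric] show False by contradiction
  qed
  have sum_vertices: "(\<Sum>p\<in>simplex_vertices. u p * p k) = (\<Sum>e\<in>edges. u (signed_edge_vec e) * signed_edge_vec e k)" for u k
    unfolding simplex_vertices_def using fin nin inj_on_signed_edge_vec by (simp add: sum.reindex)
  have sum_weights: "sum u simplex_vertices = u (\<lambda>_. 0) + (\<Sum>e\<in>edges. u (signed_edge_vec e))" for u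
    unfolding simplex_vertices_def using fin nin inj_on_signed_edge_vec by (simp add: sum.reindex)
  show "x \<in> dilated_simplex 1" if "x \<in> conv_hull simplex_vertices" for x
  proof -
    from that obtain u where u: "\<forall>p\<in>simplex_vertices. 0 \<le> u p" "sum u simplex_vertices = 1"
      "x = (\<lambda>k. \<Sum>p\<in>simplex_vertices. u p * p k)"
      unfolding conv_hull_def by (elim CollectE exE conjE)
    have "(\<Sum>e\<in>edges. u (signed_edge_vec e)) \<le> 1" using u(1,2) sum_weights[of u] by (simp add: simplex_vertices_def)
    moreover have "\<forall>e\<in>edges. 0 \<le> u (signed_edge_vec e)" using u(1) by (simp add: simplex_vertices_def)
    ultimately show ?thesis
      unfolding dilated_simplex_def u(3) sum_vertices by (intro CollectI exI[of _ "u \<circ> signed_edge_vec"]) simp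
  qed
  show "x \<in> conv_hull simplex_vertices" if "x \<in> dilated_simplex 1" for x
  proof -
    from that obtain l where x: "x = (\<lambda>k. \<Sum>e\<in>edges. l e * signed_edge_vec e k)"
      and l: "\<forall>e\<in>edges. 0 \<le> l e" "sum l edges \<le> 1"
      unfolding dilated_simplex_def by (elim CollectE exE conjE)
    define u where "u p = (if p = (\<lambda>_. 0) then 1 - sum l edges else l (the_inv_into edges signed_edge_vec p))" for p
    have u_signed_edge_vec: "u (signed_edge_vec e) = l e" if "e \<in> edges" for e
      using that signed_edge_vec_nonzero[OF that] the_inv_into_f_f[OF inj_on_signed_edge_vec that] by (simp add: u_def)
    have u_0: "u (\<lambda>_. 0) = 1 - sum l edges" by (simp add: u_def)
    have "(\<Sum>e\<in>edges. u (signed_edge_vec e)) = sum l edges" using u_signed_edge_vec by simp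
    then have "sum u simplex_vertices = 1" using sum_weights[of u] u_0 by simp
    moreover have "\<forall>p\<in>simplex_vertices. 0 \<le> u p"
      unfolding simplex_vertices_def using l u_signed_edge_vec u_0 by auto
    moreover have "x = (\<lambda>k. \<Sum>p\<in>simplex_vertices. u p * p k)"
      unfolding x sum_vertices using u_signed_edge_vec by simp
    ultimately show ?thesis unfolding conv_hull_def by (intro CollectI exI[of _ u] conjI)
  qed
qed

lemma mink_sum_dilated_simplex_subset:
  "mink_sum (\<lambda>_. dilated_simplex 1) S \<subseteq> dilated_simplex (real (card S))"
proof
  fix x assume "x \<in> mink_sum (\<lambda>_. dilated_simplex 1) S"
  then obtain y where x: "x = (\<lambda>k. \<Sum>i\<in>S. y i k)" and y: "\<forall>i\<in>S. y i \<in> dilated_simplex 1"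
    unfolding mink_sum_def by (elim CollectE exE conjE)
  from bchoice[OF y[unfolded dilated_simplex_def mem_Collect_eq]]
  obtain L where L: "\<forall>i\<in>S. y i = (\<lambda>k. \<Sum>e\<in>edges. L i e * signed_edge_vec e k) \<and> (\<forall>e\<in>edges. 0 \<le> L i e)
      \<and> sum (L i) edges \<le> 1"
    by (elim exE)
  define l where "l e = (\<Sum>i\<in>S. L i e)" for e
  have "x = (\<lambda>k. \<Sum>e\<in>edges. l e * signed_edge_vec e k)"
  proof
    fix k
    have "x k = (\<Sum>i\<in>S. \<Sum>e\<in>edges. L i e * signed_edge_vec e k)" unfolding x using L by simp
    also have "\<dots> = (\<Sum>e\<in>edges. l e * signed_edge_vec e k)"
      unfolding l_def by (subst sum.swap) (simp add: sum_distrib_right)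
    finally show "x k = (\<Sum>e\<in>edges. l e * signed_edge_vec e k)" .
  qed
  moreover have "\<forall>e\<in>edges. 0 \<le> l e" unfolding l_def using L by (auto intro!: sum_nonneg)
  moreover have "sum l edges \<le> real (card S)"
  proof -
    have "sum l edges = (\<Sum>i\<in>S. sum (L i) edges)" unfolding l_def by (rule sum.swap)
    also have "\<dots> \<le> (\<Sum>i\<in>S. 1)" using L by (intro sum_mono) auto
    finally show ?thesis by simp
  qed
  ultimately show "x \<in> dilated_simplex (real (card S))"
    unfolding dilated_simplex_def by (intro CollectI exI[of _ l] conjI)
qed

lemma dilated_simplex_subset_mink_sum:
  assumes "finite S"
  shows "dilated_simplex (real (card S)) \<subseteq> mink_sum (\<lambda>_. dilated_simplex 1) S"
proof
  fix x assume "x \<in> dilated_simplex (real (card S))"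
  then obtain l where x: "x = (\<lambda>k. \<Sum>e\<in>edges. l e * signed_edge_vec e k)"
    and l: "\<forall>e\<in>edges. 0 \<le> l e" "sum l edges \<le> real (card S)"
    unfolding dilated_simplex_def by (elim CollectE exE conjE)
  show "x \<in> mink_sum (\<lambda>_. dilated_simplex 1) S"
  proof (cases "S = {}")
    case True
    then have "sum l edges = 0" using l sum_nonneg[of edges l] by simp
    then have "\<forall>e\<in>edges. l e = 0" using l(1) sum_nonneg_eq_0_iff[of edges l] by simp
    then show ?thesis unfolding mink_sum_def x True by simp
  next
    case False
    then have S: "real (card S) > 0" using assms by (simp add: card_gt_0_iff)
    define y where "y = (\<lambda>k. \<Sum>e\<in>edges. (l e / real (card S)) * signed_edge_vec e k)"
    have "y \<in> dilated_simplex 1"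
      unfolding dilated_simplex_def y_def using l S
      by (intro CollectI exI[of _ "\<lambda>e. l e / real (card S)"])
         (simp add: sum_divide_distrib[symmetric])
    moreover have "x = (\<lambda>k. \<Sum>i\<in>S. y k)"
      unfolding x y_def using S by (simp add: sum_distrib_left)
    ultimately show ?thesis unfolding mink_sum_def by (intro CollectI exI[of _ "\<lambda>_. y"]) simp
  qed
qed

lemma mixed_volume_simplex: "mixed_volume n (\<lambda>_. conv_hull simplex_vertices) = 1"
proof -
  have "vol n (mink_sum (\<lambda>_. conv_hull simplex_vertices) S) = real (card S) ^ n * (1 / fact n)"
    if "S \<subseteq> {1..n}" for S
  proof -
    have "finite S" using that finite_subset by blast
    then have "mink_sum (\<lambda>_. dilated_simplex 1) S = dilated_simplex (real (card S))"
      using mink_sum_dilated_simplex_subset dilated_simplex_subset_mink_sum by blast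
    then show ?thesis by (simp add: conv_hull_simplex_vertices vol_dilated_simplex)
  qed
  then show ?thesis using mixed_volume_const[of n "conv_hull simplex_vertices" "1 / fact n"] by simp
qed

end

section \<open>Initial forms of \<open>h\<close> at a point\<close>

definition sign_of :: "nat set \<Rightarrow> nat \<Rightarrow> real" where
  "sign_of P e = (if e \<in> P then 1 else -1)"

lemma abs_sign_of_mult_edge_val: "\<bar>sign_of P e * edge_val N e\<bar> = edge_val N e"
  using edge_val_ge_1[of N e] by (simp add: sign_of_def abs_mult)

lemma sum_sign_of:
  assumes "finite A" and "P \<subseteq> A"
  shows "(\<Sum>e\<in>A. sign_of P e) = 2 * real (card P) - real (card A)"
proof -
  have "(\<Sum>e\<in>A. sign_of P e) = (\<Sum>e\<in>A. 2 * (if e \<in> P then 1 else 0) - 1)"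
    by (intro sum.cong) (auto simp: sign_of_def)
  also have "\<dots> = 2 * real (card (A \<inter> P)) - real (card A)"
    using assms(1) by (simp add: sum_subtractf sum_distrib_left[symmetric] sum.If_cases)
  finally show ?thesis using assms(2) by (simp add: Int_absorb1)
qed

lemma sum_sign_of_edge_val:
  assumes "A \<subseteq> {..<N}" and "P \<subseteq> A"
  shows "(\<Sum>e\<in>A. sign_of P e * edge_val N e)
    = 2 * real (card P) - real (card A) + (if even N \<and> 0 \<in> A then sign_of P 0 else 0)"
proof -
  have fin: "finite A" using assms(1) finite_subset by blast
  have "(\<Sum>e\<in>A. sign_of P e * edge_val N e) = (\<Sum>e\<in>A. sign_of P e + (if even N \<and> e = 0 then sign_of P e else 0))"
    by (intro sum.cong) (auto simp: edge_val_def)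
  also have "\<dots> = (\<Sum>e\<in>A. sign_of P e) + (if even N \<and> 0 \<in> A then sign_of P 0 else 0)"
    using fin by (cases "even N") (simp_all add: sum.distrib sum.delta)
  finally show ?thesis using sum_sign_of[OF fin assms(2)] by simp
qed

definition simplex_point :: "nat \<Rightarrow> (nat \<Rightarrow> real) \<Rightarrow> bool" where
  "simplex_point N w \<longleftrightarrow> (\<exists>j<N. \<bar>edge_diff N w j\<bar> < edge_val N j
     \<and> (\<forall>e<N. e \<noteq> j \<longrightarrow> \<bar>edge_diff N w e\<bar> = edge_val N e))"

locale cycle_point =
  fixes N n :: nat and w :: "nat \<Rightarrow> real"
  assumes N3: "N \<ge> 3" and N: "N = Suc n" and w: "w \<in> pts n"
begin

definition trop_min :: real where
  "trop_min = trop_eval (h_terms N) n w"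

definition pos_active :: "nat \<Rightarrow> bool" where
  "pos_active e \<longleftrightarrow> edge_val N e + edge_diff N w e = trop_min"

definition neg_active :: "nat \<Rightarrow> bool" where
  "neg_active e \<longleftrightarrow> edge_val N e - edge_diff N w e = trop_min"

lemma less_N_iff: "e < N \<longleftrightarrow> e \<le> n"
  using N by (simp add: less_Suc_eq_le)

lemma ip_edge_vec: "ip n w (edge_vec N e) = edge_diff N w e"
  using N by (simp add: edge_diff_def)

lemma h_values:
  "(\<lambda>(a, c). c + ip n w a) ` h_terms N
     = insert 0 ((\<lambda>e. edge_val N e + edge_diff N w e) ` {..<N} \<union> (\<lambda>e. edge_val N e - edge_diff N w e) ` {..<N})"
  unfolding h_terms_eq[OF N3] image_insert image_Un image_image
  by (simp add: ip_zero ip_uminus ip_edge_vec)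

lemma trop_min_le_0: "trop_min \<le> 0"
  unfolding trop_min_def trop_eval_def h_values using finite_h_terms[OF N3] by (intro Min_le) auto

lemma trop_min_le:
  "e < N \<Longrightarrow> trop_min \<le> edge_val N e + edge_diff N w e \<and> trop_min \<le> edge_val N e - edge_diff N w e"
  unfolding trop_min_def trop_eval_def h_values using finite_h_terms[OF N3] by (auto intro!: Min_le)

lemma trop_min_attained: "trop_min = 0 \<or> (\<exists>e<N. pos_active e \<or> neg_active e)"
proof -
  have "trop_min \<in> (\<lambda>(a, c). c + ip n w a) ` h_terms N"
    unfolding trop_min_def trop_eval_def using finite_h_terms[OF N3]
    by (intro Min_in) (auto simp: h_terms_def)
  then show ?thesis unfolding h_values pos_active_def neg_active_def by auto
qed

lemma not_pos_and_neg_active: "\<not> (pos_active e \<and> neg_active e)"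
  using trop_min_le_0 edge_val_ge_1[of N e] by (auto simp: pos_active_def neg_active_def)

lemma mem_h_terms:
  "(a, c) \<in> h_terms N \<longleftrightarrow> (a = (\<lambda>_. 0) \<and> c = 0) \<or> (\<exists>e<N. a = edge_vec N e \<and> c = edge_val N e)
     \<or> (\<exists>e<N. a = (\<lambda>k. - edge_vec N e k) \<and> c = edge_val N e)"
  unfolding h_terms_eq[OF N3] by auto

lemma init_exps_iff:
  "a \<in> init_exps (h_terms N) n w \<longleftrightarrow> (a = (\<lambda>_. 0) \<and> trop_min = 0)
     \<or> (\<exists>e<N. a = edge_vec N e \<and> pos_active e) \<or> (\<exists>e<N. a = (\<lambda>k. - edge_vec N e k) \<and> neg_active e)"
proof -
  have "a \<in> init_exps (h_terms N) n w \<longleftrightarrow> (\<exists>c. (a, c) \<in> h_terms N \<and> c + ip n w a = trop_min)"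
    by (simp add: init_exps_def trop_min_def)
  also have "\<dots> \<longleftrightarrow> (a = (\<lambda>_. 0) \<and> trop_min = 0)
     \<or> (\<exists>e<N. a = edge_vec N e \<and> pos_active e) \<or> (\<exists>e<N. a = (\<lambda>k. - edge_vec N e k) \<and> neg_active e)"
    unfolding mem_h_terms by (auto simp: ip_zero ip_uminus ip_edge_vec pos_active_def neg_active_def)
  finally show ?thesis .
qed

lemma finite_init_exps: "finite (init_exps (h_terms N) n w)"
proof -
  have "init_exps (h_terms N) n w \<subseteq> fst ` h_terms N" unfolding init_exps_def by force
  then show ?thesis using finite_h_terms[OF N3] finite_subset by blast
qed

lemma self_int_mult_eq: "self_int_mult N w = mixed_volume n (\<lambda>_. conv_hull (init_exps (h_terms N) n w))"
  unfolding self_int_mult_def stable_mult_def using N by simp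

text \<open>The initial exponents then lie in the hyperplane \<open>ip n (point_of_diffs N \<delta>) x = D\<close>.\<close>

lemma self_int_mult_eq_0_if_hyperplane:
  fixes \<delta> :: "nat \<Rightarrow> real"
  assumes "(\<Sum>e<N. \<delta> e) = 0" and "e0 < N" and "\<delta> e0 \<noteq> 0"
    and "trop_min = 0 \<Longrightarrow> D = 0"
    and "\<And>e. e < N \<Longrightarrow> pos_active e \<Longrightarrow> \<delta> e = D"
    and "\<And>e. e < N \<Longrightarrow> neg_active e \<Longrightarrow> \<delta> e = - D"
  shows "self_int_mult N w = 0"
proof -
  obtain k where k: "k \<in> {1..n}" "point_of_diffs N \<delta> k \<noteq> 0"
    using point_of_diffs_nonzero[OF N assms(1-3)] by blast
  have ip_edge: "ip n (point_of_diffs N \<delta>) (edge_vec N e) = \<delta> e" if "e < N" for e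
    using edge_diff_point_of_diffs[OF N assms(1) that] N by (simp add: edge_diff_def)
  have "\<forall>a\<in>init_exps (h_terms N) n w. ip n (point_of_diffs N \<delta>) a = D"
  proof
    fix a assume "a \<in> init_exps (h_terms N) n w"
    then show "ip n (point_of_diffs N \<delta>) a = D"
      using assms(4-6) unfolding init_exps_iff by (auto simp: ip_zero ip_uminus ip_edge)
  qed
  then have "ip n (point_of_diffs N \<delta>) x = D" if "x \<in> conv_hull (init_exps (h_terms N) n w)" for x
    using ip_conv_hull_eq[OF finite_init_exps _ that] by simp
  then show ?thesis unfolding self_int_mult_eq
    by (intro mixed_volume_eq_0_if_hyperplane[where c = "point_of_diffs N \<delta>" and k = k and D = "\<lambda>_. D"]
        k ballI) simp
qed

lemma self_int_mult_eq_0_if_two_inactive: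
  assumes "trop_min = 0" and "p < N" and "q < N" and "p \<noteq> q"
    and "\<not> pos_active p" "\<not> neg_active p" "\<not> pos_active q" "\<not> neg_active q"
  shows "self_int_mult N w = 0"
proof (rule self_int_mult_eq_0_if_hyperplane)
  define \<delta> :: "nat \<Rightarrow> real" where "\<delta> e = (if e = p then 1 else 0) - (if e = q then 1 else 0)" for e
  show "(\<Sum>e<N. \<delta> e) = 0" using assms(2,3) by (simp add: \<delta>_def sum_subtractf)
  show "\<delta> p \<noteq> 0" using assms(4) by (simp add: \<delta>_def)
  show "\<delta> e = 0" if "pos_active e" for e using that assms(5-8) by (auto simp: \<delta>_def)
  show "\<delta> e = - 0" if "neg_active e" for e using that assms(5-8) by (auto simp: \<delta>_def)
qed (use assms(2) in auto)

lemma self_int_mult_eq_0_if_inactive: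
  assumes "trop_min < 0" and "q < N" and "\<not> pos_active q" and "\<not> neg_active q"
  shows "self_int_mult N w = 0"
proof -
  define A where "A = {e. e < N \<and> (pos_active e \<or> neg_active e)}"
  define s :: "nat \<Rightarrow> real" where "s e = (if pos_active e then 1 else -1)" for e
  text \<open>Prescribe the signs on the active edges and let the inactive edge \<open>q\<close> compensate.\<close>
  define \<delta> where "\<delta> e = (if e \<in> A then s e else 0) + (if e = q then - (\<Sum>e'\<in>A. s e') else 0)" for e
  obtain e0 where e0: "e0 \<in> A"
    using trop_min_attained assms(1) by (auto simp: A_def)
  have A: "A \<subseteq> {..<N}" "q \<notin> A" using assms(3,4) by (auto simp: A_def)
  show ?thesis
  proof (rule self_int_mult_eq_0_if_hyperplane[where \<delta> = \<delta> and D = 1])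
    have "(\<Sum>e<N. \<delta> e) = (\<Sum>e\<in>A. s e) - (\<Sum>e\<in>A. s e)"
      using A assms(2) by (simp add: \<delta>_def sum.distrib sum.If_cases Int_absorb1 inf.absorb_iff2)
    then show "(\<Sum>e<N. \<delta> e) = 0" by simp
    show "e0 < N" "\<delta> e0 \<noteq> 0" using e0 A by (auto simp: A_def \<delta>_def s_def)
    show "\<delta> e = 1" if "e < N" "pos_active e" for e
      using that A by (auto simp: A_def \<delta>_def s_def)
    show "\<delta> e = - 1" if "e < N" "neg_active e" for e
      using that A not_pos_and_neg_active[of e] by (auto simp: A_def \<delta>_def s_def)
  qed (use assms(1) in simp)
qed

text \<open>Otherwise \<open>edge_diff N w e = \<plusminus>(trop_min - edge_val N e)\<close> for all \<open>e\<close>, and summing over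
  the cycle contradicts the parity of the number of \<open>+\<close> signs.\<close>

lemma ex_inactive: "\<exists>q<N. \<not> pos_active q \<and> \<not> neg_active q"
proof (rule ccontr)
  assume "\<not> ?thesis"
  then have active: "pos_active e \<or> neg_active e" if "e < N" for e using that by blast
  define P where "P = {e. e < N \<and> pos_active e}"
  have P: "P \<subseteq> {..<N}" by (auto simp: P_def)
  have "edge_diff N w e = sign_of P e * (trop_min - edge_val N e)" if "e < N" for e
    using active[OF that] not_pos_and_neg_active[of e] that
    by (auto simp: sign_of_def P_def pos_active_def neg_active_def)
  then have "0 = (\<Sum>e<N. sign_of P e * (trop_min - edge_val N e))"
    using sum_edge_diff[OF w N] by simp
  also have "\<dots> = trop_min * (\<Sum>e<N. sign_of P e) - (\<Sum>e<N. sign_of P e * edge_val N e)"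
    by (simp add: algebra_simps sum_subtractf sum_distrib_left)
  finally have eq: "(trop_min - 1) * (2 * real (card P) - real N) = (if even N then sign_of P 0 else 0)"
    using sum_sign_of[OF _ P] sum_sign_of_edge_val[of "{..<N}" N P] P N3 by (simp add: algebra_simps)
  have "\<bar>trop_min - 1\<bar> \<ge> 1" using trop_min_le_0 by simp
  show False
  proof (cases "2 * card P = N")
    case True
    then show False using eq by (auto simp: sign_of_def split: if_splits)
  next
    case False
    then have "2 * card P + (if even N then 2 else 1) \<le> N \<or> N + (if even N then 2 else 1) \<le> 2 * card P"
      by presburger
    then have "real (2 * card P + (if even N then 2 else 1)) \<le> real N
        \<or> real (N + (if even N then 2 else 1)) \<le> real (2 * card P)"
      by (simp only: of_nat_le_iff)
    then have "\<bar>2 * real (card P) - real N\<bar> \<ge> (if even N then 2 else 1)"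
      by (cases "even N") auto
    then have "\<bar>(trop_min - 1) * (2 * real (card P) - real N)\<bar> \<ge> (if even N then 2 else 1)"
      using \<open>\<bar>trop_min - 1\<bar> \<ge> 1\<close> unfolding abs_mult
      by (smt (verit) mult_le_cancel_right1 mult_mono)
    then show False using eq by (auto simp: sign_of_def split: if_splits)
  qed
qed

lemma simplex_point_if_one_inactive:
  assumes "trop_min = 0" and "q < N" and "\<not> pos_active q" and "\<not> neg_active q"
    and "\<And>p. p < N \<Longrightarrow> p \<noteq> q \<Longrightarrow> pos_active p \<or> neg_active p"
  shows "simplex_point N w"
  unfolding simplex_point_def
proof (intro exI[of _ q] conjI allI impI)
  show "q < N" by fact
  show "\<bar>edge_diff N w q\<bar> < edge_val N q"
    using trop_min_le[OF assms(2)] assms(1,3,4) by (auto simp: pos_active_def neg_active_def)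
  show "\<bar>edge_diff N w e\<bar> = edge_val N e" if "e < N" "e \<noteq> q" for e
    using assms(1) assms(5)[OF that] edge_val_ge_1[of N e] by (auto simp: pos_active_def neg_active_def)
qed

lemma self_int_mult_eq_0_if_not_simplex_point:
  assumes "\<not> simplex_point N w"
  shows "self_int_mult N w = 0"
proof -
  obtain q where q: "q < N" "\<not> pos_active q" "\<not> neg_active q" using ex_inactive by blast
  consider "trop_min < 0" | "trop_min = 0" using trop_min_le_0 by linarith
  then show ?thesis
  proof cases
    case 1
    then show ?thesis using self_int_mult_eq_0_if_inactive q by blast
  next
    case 2
    show ?thesis
    proof (cases "\<exists>p<N. p \<noteq> q \<and> \<not> pos_active p \<and> \<not> neg_active p")
      case True
      then show ?thesis using self_int_mult_eq_0_if_two_inactive 2 q by blast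
    next
      case False
      then have "simplex_point N w" using simplex_point_if_one_inactive[OF 2 q] by blast
      with assms show ?thesis by contradiction
    qed
  qed
qed

end

locale simplex_cycle_point = cycle_point +
  fixes j :: nat
  assumes j: "j < N" and small: "\<bar>edge_diff N w j\<bar> < edge_val N j"
    and tight: "\<And>e. e < N \<Longrightarrow> e \<noteq> j \<Longrightarrow> \<bar>edge_diff N w e\<bar> = edge_val N e"
begin

definition edge_sign :: "nat \<Rightarrow> real" where
  "edge_sign e = - sgn (edge_diff N w e)"

lemma trop_min_eq_0: "trop_min = 0"
proof -
  have bounded: "\<bar>edge_diff N w e\<bar> \<le> edge_val N e" if "e < N" for e
    using small tight[OF that] by (cases "e = j") auto
  consider "trop_min = 0" | e where "e < N" "pos_active e \<or> neg_active e"
    using trop_min_attained by blast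
  then have "trop_min \<ge> 0"
  proof cases
    case (2 e)
    then show ?thesis using bounded[of e] by (auto simp: pos_active_def neg_active_def abs_le_iff)
  qed simp
  then show ?thesis using trop_min_le_0 by simp
qed

lemma edge_sign_cases:
  assumes "e < N" and "e \<noteq> j"
  shows "edge_sign e = 1 \<and> edge_diff N w e = - edge_val N e \<or> edge_sign e = -1 \<and> edge_diff N w e = edge_val N e"
  using tight[OF assms] edge_val_ge_1[of N e] by (auto simp: edge_sign_def abs_if sgn_if split: if_splits)

sublocale S: signed_simplex N n j edge_sign
proof
  show "N = Suc n" "j \<le> n" using N j by auto
  show "edge_sign e = 1 \<or> edge_sign e = -1" if "e \<le> n" "e \<noteq> j" for e
    using edge_sign_cases[of e] that N by auto
qed

lemma pos_active_iff: "e < N \<Longrightarrow> pos_active e \<longleftrightarrow> e \<noteq> j \<and> edge_sign e = 1"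
  and neg_active_iff: "e < N \<Longrightarrow> neg_active e \<longleftrightarrow> e \<noteq> j \<and> edge_sign e = -1"
proof -
  have "\<not> pos_active j" "\<not> neg_active j"
    using small trop_min_eq_0 by (simp_all add: pos_active_def neg_active_def abs_less_iff)
  moreover have "pos_active e \<longleftrightarrow> edge_sign e = 1" "neg_active e \<longleftrightarrow> edge_sign e = -1"
    if "e < N" "e \<noteq> j"
    using edge_sign_cases[OF that] trop_min_eq_0 edge_val_ge_1[of N e]
    by (elim disjE conjE; simp add: pos_active_def neg_active_def)+
  ultimately show "e < N \<Longrightarrow> pos_active e \<longleftrightarrow> e \<noteq> j \<and> edge_sign e = 1"
    "e < N \<Longrightarrow> neg_active e \<longleftrightarrow> e \<noteq> j \<and> edge_sign e = -1"
    by (cases "e = j"; simp)+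
qed

lemma signed_edge_vec_eq:
  assumes "e < N" and "e \<noteq> j"
  shows "S.signed_edge_vec e = (if edge_sign e = 1 then edge_vec N e else (\<lambda>k. - edge_vec N e k))"
  using edge_sign_cases[OF assms] by (elim disjE conjE) (simp_all add: S.signed_edge_vec_def)

lemma init_exps_eq_simplex_vertices: "init_exps (h_terms N) n w = S.simplex_vertices"
proof (intro equalityI subsetI)
  fix a assume "a \<in> init_exps (h_terms N) n w"
  then have "a = (\<lambda>_. 0) \<or> (\<exists>e\<in>S.edges. a = S.signed_edge_vec e)"
    unfolding init_exps_iff
  proof (elim disjE exE conjE)
    fix e assume "e < N" "a = edge_vec N e" "pos_active e"
    then have "e \<in> S.edges" "a = S.signed_edge_vec e" using pos_active_iff[of e] signed_edge_vec_eq[of e] less_N_iff by auto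
    then show ?thesis by (intro disjI2 bexI[of _ e])
  next
    fix e assume "e < N" "a = (\<lambda>k. - edge_vec N e k)" "neg_active e"
    then have "e \<in> S.edges" "a = S.signed_edge_vec e" using neg_active_iff[of e] signed_edge_vec_eq[of e] less_N_iff by auto
    then show ?thesis by (intro disjI2 bexI[of _ e])
  qed simp
  then show "a \<in> S.simplex_vertices" by (simp add: S.simplex_vertices_def image_iff)
next
  fix a assume "a \<in> S.simplex_vertices"
  then have "a = (\<lambda>_. 0) \<or> (\<exists>e\<in>S.edges. a = S.signed_edge_vec e)"
    by (simp add: S.simplex_vertices_def image_iff)
  then show "a \<in> init_exps (h_terms N) n w"
  proof (elim disjE bexE)
    fix e assume "e \<in> S.edges" "a = S.signed_edge_vec e"
    then have e: "e < N" "e \<noteq> j" and a: "a = S.signed_edge_vec e" using less_N_iff by auto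
    from edge_sign_cases[OF e] show ?thesis
    proof (elim disjE conjE)
      assume "edge_sign e = 1"
      then have "a = edge_vec N e" "pos_active e" using a signed_edge_vec_eq[OF e] pos_active_iff[OF e(1)] e(2) by simp_all
      then show ?thesis unfolding init_exps_iff using e(1) by (intro disjI2 disjI1 exI[of _ e] conjI)
    next
      assume "edge_sign e = -1"
      then have "a = (\<lambda>k. - edge_vec N e k)" "neg_active e" using a signed_edge_vec_eq[OF e] neg_active_iff[OF e(1)] e(2) by simp_all
      then show ?thesis unfolding init_exps_iff using e(1) by (intro disjI2 exI[of _ e] conjI)
    qed
  qed (simp add: init_exps_iff trop_min_eq_0)
qed

lemma self_int_mult_eq_1: "self_int_mult N w = 1"
  unfolding self_int_mult_eq init_exps_eq_simplex_vertices by (rule S.mixed_volume_simplex)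

end

lemma (in cycle_point) self_int_mult_eq_1_if_simplex_point:
  assumes "simplex_point N w"
  shows "self_int_mult N w = 1"
proof -
  obtain j where "j < N" "\<bar>edge_diff N w j\<bar> < edge_val N j"
    "\<And>e. e < N \<Longrightarrow> e \<noteq> j \<Longrightarrow> \<bar>edge_diff N w e\<bar> = edge_val N e"
    using assms unfolding simplex_point_def by blast
  then interpret simplex_cycle_point N n w j by unfold_locales
  show ?thesis by (rule self_int_mult_eq_1)
qed

section \<open>Counting the simplex points\<close>

text \<open>A simplex point is determined by its special edge \<open>j\<close> and the set \<open>P\<close> of the other
  edges \<open>e\<close> with \<open>edge_diff N w e = edge_val N e\<close>; the edge difference at \<open>j\<close> is then forced
  by the differences summing to zero.\<close>

definition vertex_diffs :: "nat \<Rightarrow> nat \<Rightarrow> nat set \<Rightarrow> nat \<Rightarrow> real" where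
  "vertex_diffs N j P e = (if e = j then - (\<Sum>e'\<in>{..<N} - {j}. sign_of P e' * edge_val N e')
     else sign_of P e * edge_val N e)"

definition admissible_sets :: "nat \<Rightarrow> nat \<Rightarrow> nat set set" where
  "admissible_sets N j = {P. P \<subseteq> {..<N} - {j}
     \<and> \<bar>\<Sum>e\<in>{..<N} - {j}. sign_of P e * edge_val N e\<bar> < edge_val N j}"

lemma sum_vertex_diffs:
  assumes "j < N"
  shows "(\<Sum>e<N. vertex_diffs N j P e) = 0"
proof -
  have "(\<Sum>e<N. vertex_diffs N j P e) = vertex_diffs N j P j + (\<Sum>e\<in>{..<N} - {j}. vertex_diffs N j P e)"
    using assms by (subst sum.remove[of _ j]) auto
  also have "(\<Sum>e\<in>{..<N} - {j}. vertex_diffs N j P e) = (\<Sum>e\<in>{..<N} - {j}. sign_of P e * edge_val N e)"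
    by (intro sum.cong) (auto simp: vertex_diffs_def)
  finally show ?thesis by (simp add: vertex_diffs_def)
qed

lemma edge_diff_vertex:
  assumes "N = Suc n" and "j < N" and "e < N"
  shows "edge_diff N (point_of_diffs N (vertex_diffs N j P)) e = vertex_diffs N j P e"
  using edge_diff_point_of_diffs[OF assms(1) sum_vertex_diffs[OF assms(2)] assms(3)] .

lemma simplex_points_eq_image:
  assumes N: "N = Suc n"
  shows "{w \<in> pts n. simplex_point N w}
    = (\<lambda>(j, P). point_of_diffs N (vertex_diffs N j P)) ` Sigma {..<N} (admissible_sets N)"
proof (intro equalityI subsetI)
  fix w assume "w \<in> {w \<in> pts n. simplex_point N w}"
  then have w: "w \<in> pts n" and "simplex_point N w" by auto
  then obtain j where j: "j < N" "\<bar>edge_diff N w j\<bar> < edge_val N j"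
    and others: "\<And>e. e < N \<Longrightarrow> e \<noteq> j \<Longrightarrow> \<bar>edge_diff N w e\<bar> = edge_val N e"
    unfolding simplex_point_def by (elim exE conjE) simp
  define P where "P = {e \<in> {..<N} - {j}. edge_diff N w e = edge_val N e}"
  have signs: "sign_of P e * edge_val N e = edge_diff N w e" if "e \<in> {..<N} - {j}" for e
    using others[of e] that edge_val_ge_1[of N e] by (auto simp: sign_of_def P_def abs_if split: if_splits)
  have "(\<Sum>e<N. edge_diff N w e) = edge_diff N w j + (\<Sum>e\<in>{..<N} - {j}. edge_diff N w e)"
    using j by (subst sum.remove[of _ j]) auto
  then have sum_others: "(\<Sum>e\<in>{..<N} - {j}. sign_of P e * edge_val N e) = - edge_diff N w j"
    using sum_edge_diff[OF w N] signs by simp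
  have "(j, P) \<in> Sigma {..<N} (admissible_sets N)"
    using j sum_others by (auto simp: admissible_sets_def P_def)
  moreover have "vertex_diffs N j P e = edge_diff N w e" if "e < N" for e
    using sum_others signs that by (cases "e = j") (auto simp: vertex_diffs_def)
  then have "point_of_diffs N (vertex_diffs N j P) = w"
    using point_of_diffs_cong[of N "vertex_diffs N j P"] point_of_diffs_edge_diff[OF w N] by simp
  ultimately show "w \<in> (\<lambda>(j, P). point_of_diffs N (vertex_diffs N j P)) ` Sigma {..<N} (admissible_sets N)"
    by (intro image_eqI[of _ _ "(j, P)"]) simp_all
next
  fix w assume "w \<in> (\<lambda>(j, P). point_of_diffs N (vertex_diffs N j P)) ` Sigma {..<N} (admissible_sets N)"
  then obtain jP where jP: "jP \<in> Sigma {..<N} (admissible_sets N)"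
    and w: "w = (\<lambda>(j, P). point_of_diffs N (vertex_diffs N j P)) jP" by (rule imageE)
  obtain j P where "jP = (j, P)" by (cases jP)
  then have j: "j < N" and P: "P \<in> admissible_sets N j" and w: "w = point_of_diffs N (vertex_diffs N j P)"
    using jP w by auto
  have "w \<in> pts n" using w point_of_diffs_in_pts[of N] N by simp
  moreover have "simplex_point N w"
    unfolding simplex_point_def w using j P abs_sign_of_mult_edge_val
    by (intro exI[of _ j]) (auto simp: edge_diff_vertex[OF N j] vertex_diffs_def admissible_sets_def)
  ultimately show "w \<in> {w \<in> pts n. simplex_point N w}" by simp
qed

lemma vertex_diffs_eqD:
  assumes "j < N" and "P \<in> admissible_sets N j" and "j' < N" and "P' \<in> admissible_sets N j'"
    and eq: "\<And>e. e < N \<Longrightarrow> vertex_diffs N j P e = vertex_diffs N j' P' e"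
  shows "j = j' \<and> P = P'"
proof -
  have "j = j'"
  proof (rule ccontr)
    assume "j \<noteq> j'"
    then have "\<bar>vertex_diffs N j P j'\<bar> = edge_val N j'"
      by (simp add: vertex_diffs_def abs_sign_of_mult_edge_val)
    moreover have "\<bar>vertex_diffs N j' P' j'\<bar> < edge_val N j'"
      using assms(4) by (simp add: vertex_diffs_def admissible_sets_def)
    ultimately show False using eq[OF assms(3)] by simp
  qed
  have mem: "e \<in> Q \<longleftrightarrow> vertex_diffs N j Q e = edge_val N e" if "e \<noteq> j" for e Q
    using that edge_val_ge_1[of N e] by (auto simp: vertex_diffs_def sign_of_def)
  have sub: "P \<subseteq> {..<N} - {j}" "P' \<subseteq> {..<N} - {j}"
    using assms(2,4) \<open>j = j'\<close> by (auto simp: admissible_sets_def)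
  have "e \<in> P \<longleftrightarrow> e \<in> P'" if "e \<in> {..<N} - {j}" for e
    using mem[of e P] mem[of e P'] eq[of e] that \<open>j = j'\<close> by simp
  then have "P = P'" using sub by (intro equalityI subsetI) auto
  with \<open>j = j'\<close> show ?thesis ..
qed

lemma inj_on_vertex_point:
  assumes N: "N = Suc n"
  shows "inj_on (\<lambda>(j, P). point_of_diffs N (vertex_diffs N j P)) (Sigma {..<N} (admissible_sets N))"
proof (rule inj_onI)
  fix x y assume x: "x \<in> Sigma {..<N} (admissible_sets N)" and y: "y \<in> Sigma {..<N} (admissible_sets N)"
    and eq: "(\<lambda>(j, P). point_of_diffs N (vertex_diffs N j P)) x = (\<lambda>(j, P). point_of_diffs N (vertex_diffs N j P)) y"
  obtain j P j' P' where xy: "x = (j, P)" "y = (j', P')" by (cases x, cases y)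
  have j: "j < N" "P \<in> admissible_sets N j" "j' < N" "P' \<in> admissible_sets N j'"
    using x y xy by auto
  have "vertex_diffs N j P e = vertex_diffs N j' P' e" if "e < N" for e
    using edge_diff_vertex[OF N j(1) that, of P] edge_diff_vertex[OF N j(3) that, of P'] eq xy by simp
  then show "x = y" using vertex_diffs_eqD[OF j] xy by simp
qed

lemma sum_sign_of_edge_val_int:
  assumes "j < N" and "P \<subseteq> {..<N} - {j}"
  shows "(\<Sum>e\<in>{..<N} - {j}. sign_of P e * edge_val N e)
    = of_int (2 * int (card P) - int (N - 1) + (if even N \<and> j \<noteq> 0 then (if 0 \<in> P then 1 else -1) else 0))"
  using sum_sign_of_edge_val[of "{..<N} - {j}" N P] assms by (auto simp: sign_of_def)

lemma abs_of_int_less_of_int_iff: "\<bar>(of_int z :: real)\<bar> < of_int b \<longleftrightarrow> \<bar>z\<bar> < b"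
  by (metis of_int_abs of_int_less_iff)

lemma admissible_sets_odd:
  assumes "odd N" and "j < N"
  shows "admissible_sets N j = {P. P \<subseteq> {..<N} - {j} \<and> card P = (N - 1) div 2}"
proof -
  have "\<bar>\<Sum>e\<in>{..<N} - {j}. sign_of P e * edge_val N e\<bar> < edge_val N j \<longleftrightarrow> card P = (N - 1) div 2"
    if "P \<subseteq> {..<N} - {j}" for P
  proof -
    have "edge_val N j = of_int 1" using assms(1) by (simp add: edge_val_def)
    then have "\<bar>\<Sum>e\<in>{..<N} - {j}. sign_of P e * edge_val N e\<bar> < edge_val N j
        \<longleftrightarrow> \<bar>2 * int (card P) - int (N - 1)\<bar> < 1"
      unfolding sum_sign_of_edge_val_int[OF assms(2) that] using assms(1)
      by (simp only: abs_of_int_less_of_int_iff if_False simp_thms add_0_right)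
    also have "\<dots> \<longleftrightarrow> card P = (N - 1) div 2" using assms(1) by presburger
    finally show ?thesis .
  qed
  then show ?thesis unfolding admissible_sets_def by blast
qed

lemma admissible_sets_even_0:
  assumes "N = 2 * K + 4"
  shows "admissible_sets N 0 = {P. P \<subseteq> {..<N} - {0} \<and> (card P = K + 1 \<or> card P = K + 2)}"
proof -
  have "\<bar>\<Sum>e\<in>{..<N} - {0}. sign_of P e * edge_val N e\<bar> < edge_val N 0 \<longleftrightarrow> card P = K + 1 \<or> card P = K + 2"
    if "P \<subseteq> {..<N} - {0}" for P
  proof -
    have N0: "0 < N" using assms by simp
    have "edge_val N 0 = of_int 2" using assms by (simp add: edge_val_def)
    then have "\<bar>\<Sum>e\<in>{..<N} - {0}. sign_of P e * edge_val N e\<bar> < edge_val N 0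
        \<longleftrightarrow> \<bar>2 * int (card P) - int (N - 1)\<bar> < 2"
      unfolding sum_sign_of_edge_val_int[OF N0 that] using assms
      by (simp only: abs_of_int_less_of_int_iff if_False simp_thms add_0_right)
    also have "\<dots> \<longleftrightarrow> card P = K + 1 \<or> card P = K + 2" using assms by presburger
    finally show ?thesis .
  qed
  then show ?thesis unfolding admissible_sets_def by blast
qed

lemma admissible_sets_even:
  assumes "N = 2 * K + 4" and "j < N" and "j \<noteq> 0"
  shows "admissible_sets N j
    = {P. P \<subseteq> {..<N} - {j} \<and> (0 \<in> P \<and> card P = Suc K \<or> 0 \<notin> P \<and> card P = K + 2)}"
proof -
  have "\<bar>\<Sum>e\<in>{..<N} - {j}. sign_of P e * edge_val N e\<bar> < edge_val N j
      \<longleftrightarrow> 0 \<in> P \<and> card P = Suc K \<or> 0 \<notin> P \<and> card P = K + 2"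
    if "P \<subseteq> {..<N} - {j}" for P
  proof -
    have "edge_val N j = of_int 1" using assms(3) by (simp add: edge_val_def)
    then have "\<bar>\<Sum>e\<in>{..<N} - {j}. sign_of P e * edge_val N e\<bar> < edge_val N j
        \<longleftrightarrow> \<bar>2 * int (card P) - int (N - 1) + (if 0 \<in> P then 1 else -1)\<bar> < 1"
      unfolding sum_sign_of_edge_val_int[OF assms(2) that] using assms
      by (simp only: abs_of_int_less_of_int_iff) simp
    also have "\<dots> \<longleftrightarrow> 0 \<in> P \<and> card P = Suc K \<or> 0 \<notin> P \<and> card P = K + 2"
      using assms(1) by (cases "0 \<in> P") (simp_all, presburger+)
    finally show ?thesis .
  qed
  then show ?thesis unfolding admissible_sets_def by blast
qed

lemma card_subsets_with:
  assumes "finite A" and "z \<in> A"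
  shows "card {P. P \<subseteq> A \<and> z \<in> P \<and> card P = Suc k} = (card A - 1) choose k"
proof -
  have "{P. P \<subseteq> A \<and> card P = Suc k}
      = {P. P \<subseteq> A \<and> z \<in> P \<and> card P = Suc k} \<union> {P. P \<subseteq> A - {z} \<and> card P = Suc k}"
    by auto
  then have "card A choose Suc k
      = card {P. P \<subseteq> A \<and> z \<in> P \<and> card P = Suc k} + card {P. P \<subseteq> A - {z} \<and> card P = Suc k}"
    using assms(1) by (simp add: n_subsets[symmetric] card_Un_disjoint) (subst card_Un_disjoint; auto)
  also have "card {P. P \<subseteq> A - {z} \<and> card P = Suc k} = (card A - 1) choose Suc k"
    using assms by (simp add: n_subsets)
  finally have "card A choose Suc k = card {P. P \<subseteq> A \<and> z \<in> P \<and> card P = Suc k} + ((card A - 1) choose Suc k)" .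
  moreover have "card A > 0" using assms by (auto simp: card_gt_0_iff)
  then obtain m where "card A = Suc m" by (auto dest: gr0_implies_Suc)
  ultimately show ?thesis by simp
qed

lemma card_subsets_without:
  assumes "finite A" and "z \<in> A"
  shows "card {P. P \<subseteq> A \<and> z \<notin> P \<and> card P = k} = (card A - 1) choose k"
proof -
  have "{P. P \<subseteq> A \<and> z \<notin> P \<and> card P = k} = {P. P \<subseteq> A - {z} \<and> card P = k}" by auto
  then show ?thesis using assms by (simp add: n_subsets)
qed

lemma card_admissible_sets_odd:
  assumes "odd N" and "j < N"
  shows "card (admissible_sets N j) = (N - 1) choose ((N - 1) div 2)"
  using assms by (simp add: admissible_sets_odd n_subsets)

lemma card_admissible_sets_even_0:
  assumes "N = 2 * K + 4"
  shows "card (admissible_sets N 0) = (2 * K + 3 choose (K + 1)) + (2 * K + 3 choose (K + 2))"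
proof -
  have "admissible_sets N 0 = {P. P \<subseteq> {..<N} - {0} \<and> card P = K + 1} \<union> {P. P \<subseteq> {..<N} - {0} \<and> card P = K + 2}"
    using admissible_sets_even_0[OF assms] by auto
  then have "card (admissible_sets N 0)
      = card {P. P \<subseteq> {..<N} - {0} \<and> card P = K + 1} + card {P. P \<subseteq> {..<N} - {0} \<and> card P = K + 2}"
    by (simp only:) (rule card_Un_disjoint, auto)
  moreover have "card ({..<N} - {0}) = 2 * K + 3" using assms by simp
  ultimately show ?thesis by (simp add: n_subsets)
qed

lemma card_admissible_sets_even:
  assumes "N = 2 * K + 4" and "j < N" and "j \<noteq> 0"
  shows "card (admissible_sets N j) = (2 * K + 2 choose K) + (2 * K + 2 choose (K + 2))"
proof -
  have z: "0 \<in> {..<N} - {j}" and c: "card ({..<N} - {j}) = 2 * K + 3" using assms by auto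
  have "admissible_sets N j = {P. P \<subseteq> {..<N} - {j} \<and> 0 \<in> P \<and> card P = Suc K}
      \<union> {P. P \<subseteq> {..<N} - {j} \<and> 0 \<notin> P \<and> card P = K + 2}"
    using admissible_sets_even[OF assms] by auto
  then have "card (admissible_sets N j) = card {P. P \<subseteq> {..<N} - {j} \<and> 0 \<in> P \<and> card P = Suc K}
      + card {P. P \<subseteq> {..<N} - {j} \<and> 0 \<notin> P \<and> card P = K + 2}"
    by (simp only:) (rule card_Un_disjoint, auto)
  then show ?thesis using card_subsets_with[OF _ z] card_subsets_without[OF _ z] c by simp
qed

lemma binomial_vertex_count:
  "(2 * K + 3 choose (K + 1)) + (2 * K + 3 choose (K + 2)) + (2 * K + 3) * ((2 * K + 2 choose K) + (2 * K + 2 choose (K + 2)))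
    = (2 * K + 4) * (2 * K + 3 choose (K + 1))"
proof -
  define B where "B = 2 * K + 3 choose (K + 1)"
  define C where "C = 2 * K + 2 choose K"
  have "2 * K + 2 choose (K + 2) = C"
    unfolding C_def using binomial_symmetric[of K "2 * K + 2"] by (simp add: numeral_2_eq_2)
  moreover have "2 * K + 3 choose (K + 2) = B"
    unfolding B_def using binomial_symmetric[of "K + 1" "2 * K + 3"] by (simp add: numeral_2_eq_2 numeral_3_eq_3)
  ultimately have "(2 * K + 3 choose (K + 1)) + (2 * K + 3 choose (K + 2))
      + (2 * K + 3) * ((2 * K + 2 choose K) + (2 * K + 2 choose (K + 2))) = 2 * B + 2 * ((2 * K + 3) * C)"
    unfolding B_def[symmetric] C_def[symmetric] by simp
  also have "(2 * K + 3) * C = (K + 1) * B"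
    unfolding B_def C_def using binomial_absorption[of K "2 * K + 3"] by simp
  finally show ?thesis unfolding B_def[symmetric] by (simp add: algebra_simps)
qed

lemma card_vertex_index:
  assumes "N \<ge> 3"
  shows "finite (Sigma {..<N} (admissible_sets N))"
    and "card (Sigma {..<N} (admissible_sets N)) = N * ((N - 1) choose ((N - 1) div 2))"
proof -
  have fin: "finite (admissible_sets N j)" for j
    unfolding admissible_sets_def by (rule finite_subset[of _ "Pow ({..<N} - {j})"]) auto
  then show "finite (Sigma {..<N} (admissible_sets N))" by simp
  have "card (Sigma {..<N} (admissible_sets N)) = (\<Sum>j<N. card (admissible_sets N j))"
    using fin by (simp add: card_SigmaI)
  also have "\<dots> = N * ((N - 1) choose ((N - 1) div 2))"
  proof (cases "even N")
    case False
    then show ?thesis by (simp add: card_admissible_sets_odd)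
  next
    case True
    define K where "K = (N - 4) div 2"
    have K: "N = 2 * K + 4" using True assms unfolding K_def by presburger
    let ?c = "\<lambda>j. card (admissible_sets N j)"
    have "{..<N} = {..<Suc (2 * K + 3)}" using K by simp
    then have "(\<Sum>j<N. ?c j) = (\<Sum>j<Suc (2 * K + 3). ?c j)" by simp
    also have "\<dots> = ?c 0 + (\<Sum>j<2 * K + 3. ?c (Suc j))" by (rule sum.lessThan_Suc_shift)
    also have "\<dots> = (2 * K + 3 choose (K + 1)) + (2 * K + 3 choose (K + 2))
        + (2 * K + 3) * ((2 * K + 2 choose K) + (2 * K + 2 choose (K + 2)))"
      using K by (simp add: card_admissible_sets_even_0 card_admissible_sets_even)
    also have "\<dots> = (2 * K + 4) * (2 * K + 3 choose (K + 1))" by (rule binomial_vertex_count)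
    finally have "(\<Sum>j<N. ?c j) = (2 * K + 4) * (2 * K + 3 choose (K + 1))" .
    moreover have "N - 1 = 2 * K + 3" "(N - 1) div 2 = K + 1" using K by simp_all
    ultimately show ?thesis by (simp only: K[symmetric])
  qed
  finally show "card (Sigma {..<N} (admissible_sets N)) = N * ((N - 1) choose ((N - 1) div 2))" .
qed

theorem proposition9p4:
  fixes N :: nat
  assumes "N \<ge> 3"
  shows "finite (self_int_points N)
    \<and> card (self_int_points N) = N * ((N - 1) choose ((N - 1) div 2))
    \<and> (\<forall>w\<in>self_int_points N. self_int_mult N w = 1)"
proof -
  define n where "n = N - 1"
  have N: "N = Suc n" using assms by (simp add: n_def)
  have point: "cycle_point N n w" if "w \<in> pts n" for w
    using assms N that by unfold_locales
  have points: "self_int_points N = {w \<in> pts n. simplex_point N w}"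
    using cycle_point.self_int_mult_eq_0_if_not_simplex_point[OF point]
      cycle_point.self_int_mult_eq_1_if_simplex_point[OF point]
    unfolding self_int_points_def n_def by fastforce
  then have "\<forall>w\<in>self_int_points N. self_int_mult N w = 1"
    using cycle_point.self_int_mult_eq_1_if_simplex_point[OF point] by simp
  moreover have "self_int_points N
      = (\<lambda>(j, P). point_of_diffs N (vertex_diffs N j P)) ` Sigma {..<N} (admissible_sets N)"
    using points simplex_points_eq_image[OF N] by simp
  ultimately show ?thesis
    using card_vertex_index[OF assms] card_image[OF inj_on_vertex_point[OF N]] by simp
qed

end
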